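(* Let $A=\sigma(R)\langle x_1,\dots,x_n\rangle$ be a bijective skew PBW extension over a ring $R$, with associated endomorphisms $\sigma_i$ and $\sigma_i$-derivations $\delta_i$. Then the opposite ring $A^{\mathrm{op}}$ is a bijective skew PBW extension over $R^{\mathrm{op}}$. Moreover, for $A^{\mathrm{op}}$ the associated automorphisms are $\sigma_i^{\mathrm{op}}:R^{\mathrm{op}}\to R^{\mathrm{op}}$, $\sigma_i^{\mathrm{op}}(r)=\sigma_i^{-1}(r)$, and the associated $\sigma_i^{\mathrm{op}}$-derivations are $\delta_i^{\mathrm{op}}:R^{\mathrm{op}}\to R^{\mathrm{op}}$, $\delta_i^{\mathrm{op}}(r)=-\delta_i(\sigma_i^{-1}(r))$, for $r\in R^{\mathrm{op}}$, $1\le i\le n$.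
   Context: Rings are associative with unity, not necessarily commutative. Given rings $R\subseteq A$, $A$ is a skew PBW extension over $R$, written $A=\sigma(R)\langle x_1,\dots,x_n\rangle$, if: (i) $R\subseteq A$; (ii) there are elements $x_1,\dots,x_n\in A$ such that $A$ is a free left $R$-module with basis $\mathrm{Mon}(A)=\{x_1^{\alpha_1}\cdots x_n^{\alpha_n}\mid (\alpha_1,\dots,\alpha_n)\in\mathbb{N}^n\}$; (iii) for each $1\le i\le n$ and each $r\in R\setminus\{0\}$ there is $c_{i,r}\in R\setminus\{0\}$ with $x_ir-c_{i,r}x_i\in R$; (iv) for all $1\le i,j\le n$ there is $c_{i,j}\in R\setminus\{0\}$ with $x_jx_i-c_{i,j}x_ix_j\in R+Rx_1+\cdots+Rx_n$. For such $A$, for each $i$ there exist an injective ring endomorphism $\sigma_i$ of $R$ and a $\sigma_i$-derivation $\delta_i$ of $R$ (i.e. additive with $\delta_i(rs)=\sigma_i(r)\delta_i(s)+\delta_i(r)s$) such that $x_ir=\sigma_i(r)x_i+\delta_i(r)$ for all $r\in R$. $A$ is called bijective if every $\sigma_i$ is bijective and the elements $c_{i,j}$ are invertible for $1\le i<j\le n$. The opposite ring $B^{\mathrm{op}}$ of $B$ has the same additive group and product $a*b=ba$. *)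

theory Defs
  imports "HOL-Algebra.Algebra"
begin

definition opp_ring :: "('a, 'b) ring_scheme \<Rightarrow> ('a, 'b) ring_scheme" where
  "opp_ring A = A\<lparr>mult := (\<lambda>a b. b \<otimes>\<^bsub>A\<^esub> a)\<rparr>"

definition exps :: "nat \<Rightarrow> (nat \<Rightarrow> nat) set" where
  "exps n = {\<alpha>. \<forall>i. i \<notin> {1..n} \<longrightarrow> \<alpha> i = 0}"

definition mon :: "('a, 'b) ring_scheme \<Rightarrow> (nat \<Rightarrow> 'a) \<Rightarrow> nat \<Rightarrow> (nat \<Rightarrow> nat) \<Rightarrow> 'a" where
  "mon A x n \<alpha> = foldr (\<lambda>i acc. (x i [^]\<^bsub>A\<^esub> (\<alpha> i)) \<otimes>\<^bsub>A\<^esub> acc) [1..<Suc n] \<one>\<^bsub>A\<^esub>"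

definition lin_span :: "('a, 'b) ring_scheme \<Rightarrow> 'a set \<Rightarrow> (nat \<Rightarrow> 'a) \<Rightarrow> nat \<Rightarrow> 'a set" where
  "lin_span A R x n = {r0 \<oplus>\<^bsub>A\<^esub> (\<Oplus>\<^bsub>A\<^esub>k\<in>{1..n}. r k \<otimes>\<^bsub>A\<^esub> x k) | r0 r. r0 \<in> R \<and> (\<forall>k\<in>{1..n}. r k \<in> R)}"

definition skew_PBW :: "('a, 'b) ring_scheme \<Rightarrow> 'a set \<Rightarrow> (nat \<Rightarrow> 'a) \<Rightarrow> nat \<Rightarrow> bool" where
  "skew_PBW A R x n \<longleftrightarrow>
     ring A \<and> subring R A \<and>
     (\<forall>i\<in>{1..n}. x i \<in> carrier A) \<and>
     \<comment> \<open>(ii) A is a free left R-module with basis Mon(A)\<close>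
     (\<forall>a\<in>carrier A. \<exists>!c. (\<forall>\<alpha>. c \<alpha> \<in> R) \<and> (\<forall>\<alpha>. \<alpha> \<notin> exps n \<longrightarrow> c \<alpha> = \<zero>\<^bsub>A\<^esub>) \<and>
         finite {\<alpha>. c \<alpha> \<noteq> \<zero>\<^bsub>A\<^esub>} \<and>
         a = (\<Oplus>\<^bsub>A\<^esub>\<alpha>\<in>{\<alpha>. c \<alpha> \<noteq> \<zero>\<^bsub>A\<^esub>}. c \<alpha> \<otimes>\<^bsub>A\<^esub> mon A x n \<alpha>)) \<and>
     \<comment> \<open>(iii)\<close>
     (\<forall>i\<in>{1..n}. \<forall>r\<in>R - {\<zero>\<^bsub>A\<^esub>}. \<exists>c\<in>R - {\<zero>\<^bsub>A\<^esub>}.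
         x i \<otimes>\<^bsub>A\<^esub> r \<ominus>\<^bsub>A\<^esub> c \<otimes>\<^bsub>A\<^esub> x i \<in> R) \<and>
     \<comment> \<open>(iv)\<close>
     (\<forall>i\<in>{1..n}. \<forall>j\<in>{1..n}. \<exists>c\<in>R - {\<zero>\<^bsub>A\<^esub>}.
         x j \<otimes>\<^bsub>A\<^esub> x i \<ominus>\<^bsub>A\<^esub> c \<otimes>\<^bsub>A\<^esub> x i \<otimes>\<^bsub>A\<^esub> x j \<in> lin_span A R x n)"

definition assoc_maps :: "('a, 'b) ring_scheme \<Rightarrow> 'a set \<Rightarrow> (nat \<Rightarrow> 'a) \<Rightarrow> nat
    \<Rightarrow> (nat \<Rightarrow> 'a \<Rightarrow> 'a) \<Rightarrow> (nat \<Rightarrow> 'a \<Rightarrow> 'a) \<Rightarrow> bool" where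
  "assoc_maps A R x n \<sigma> \<delta> \<longleftrightarrow>
     (\<forall>i\<in>{1..n}. \<forall>r\<in>R. \<sigma> i r \<in> R \<and> \<delta> i r \<in> R \<and>
        x i \<otimes>\<^bsub>A\<^esub> r = \<sigma> i r \<otimes>\<^bsub>A\<^esub> x i \<oplus>\<^bsub>A\<^esub> \<delta> i r)"

definition bijective_skew_PBW :: "('a, 'b) ring_scheme \<Rightarrow> 'a set \<Rightarrow> (nat \<Rightarrow> 'a) \<Rightarrow> nat \<Rightarrow> bool" where
  "bijective_skew_PBW A R x n \<longleftrightarrow>
     skew_PBW A R x n \<and>
     (\<forall>\<sigma> \<delta>. assoc_maps A R x n \<sigma> \<delta> \<longrightarrow> (\<forall>i\<in>{1..n}. bij_betw (\<sigma> i) R R)) \<and>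
     (\<forall>i\<in>{1..n}. \<forall>j\<in>{1..n}. \<forall>c\<in>R - {\<zero>\<^bsub>A\<^esub>}. i < j \<longrightarrow>
         x j \<otimes>\<^bsub>A\<^esub> x i \<ominus>\<^bsub>A\<^esub> c \<otimes>\<^bsub>A\<^esub> x i \<otimes>\<^bsub>A\<^esub> x j \<in> lin_span A R x n \<longrightarrow>
         (\<exists>d\<in>R. c \<otimes>\<^bsub>A\<^esub> d = \<one>\<^bsub>A\<^esub> \<and> d \<otimes>\<^bsub>A\<^esub> c = \<one>\<^bsub>A\<^esub>))"

end

theory Submission
  imports Defs
begin

(* Right multiplication by r \<in> R is triangular with respect to the total degree: for every
   exponent \<alpha> there is a bijection \<tau> of R with x^\<alpha> r = \<tau>(r) x^\<alpha> + (lower terms), \<tau> being a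
   composite of the \<sigma>_i. Because the coefficients c_{i,j}, i < j, are invertible, reordering any
   product of generators x_{w_1} \<dots> x_{w_k} only costs a unit and lower terms. In particular the
   standard monomials of A^op, which are the reversed products x_n^{\<alpha>_n} \<dots> x_1^{\<alpha>_1} in A, are
   unit multiples of x^\<alpha> modulo lower degree, and induction on the degree shows that they form
   a basis of A as a right R-module. The relation x_i r = \<sigma>_i(r) x_i + \<delta>_i(r) reads
   r x_i = x_i \<sigma>_i^{-1}(r) - \<delta>_i(\<sigma>_i^{-1}(r)), which gives the associated maps of A^op, and
   comparing leading coefficients in degree two shows that the new coefficients c_{i,j} are units. *)

section \<open>Opposite rings and linear combinations\<close>

lemma opp_ring_simps [simp]:
  "carrier (opp_ring A) = carrier A"
  "(\<oplus>\<^bsub>opp_ring A\<^esub>) = (\<oplus>\<^bsub>A\<^esub>)"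
  "\<zero>\<^bsub>opp_ring A\<^esub> = \<zero>\<^bsub>A\<^esub>"
  "\<one>\<^bsub>opp_ring A\<^esub> = \<one>\<^bsub>A\<^esub>"
  "a \<otimes>\<^bsub>opp_ring A\<^esub> b = b \<otimes>\<^bsub>A\<^esub> a"
  "add_monoid (opp_ring A) = add_monoid A"
  by (simp_all add: opp_ring_def)

lemma opp_ring_additive_simps [simp]:
  "a_inv (opp_ring A) = a_inv A"
  "a_minus (opp_ring A) = a_minus A"
  "finsum (opp_ring A) = finsum A"
  by (simp_all add: a_inv_def a_minus_def[abs_def] finsum_def[abs_def])

(* In opp_ring A this is the right combination \<Oplus> b \<alpha> \<otimes> c \<alpha> computed in A. *)
definition lin_comb :: "('a, 'b) ring_scheme \<Rightarrow> ('c \<Rightarrow> 'a) \<Rightarrow> ('c \<Rightarrow> 'a) \<Rightarrow> 'c set \<Rightarrow> 'a" where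
  "lin_comb R b c I = (\<Oplus>\<^bsub>R\<^esub>\<alpha>\<in>I. c \<alpha> \<otimes>\<^bsub>R\<^esub> b \<alpha>)"

definition lin_combs :: "('a, 'b) ring_scheme \<Rightarrow> 'a set \<Rightarrow> ('c \<Rightarrow> 'a) \<Rightarrow> 'c set \<Rightarrow> 'a set" where
  "lin_combs R K b E = {lin_comb R b c I | c I. finite I \<and> I \<subseteq> E \<and> (\<forall>\<alpha>\<in>I. c \<alpha> \<in> K)}"

context ring
begin

lemma ring_opp_ring: "ring (opp_ring R)"
proof (rule ringI)
  show "abelian_group (opp_ring R)"
    using is_abelian_group
    by (simp add: abelian_group_def abelian_group_axioms_def abelian_monoid_def)
  show "monoid (opp_ring R)"
    by (rule monoidI) (auto simp: m_assoc)
qed (auto simp: l_distr r_distr)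

lemma nat_pow_opp_ring: "a \<in> carrier R \<Longrightarrow> a [^]\<^bsub>opp_ring R\<^esub> (k::nat) = a [^] k"
  by (induct k) (simp_all add: opp_ring_def flip: nat_pow_Suc2)

lemma subring_opp_ring: "subring K R \<Longrightarrow> subring K (opp_ring R)"
  by (rule ring.subringI[OF ring_opp_ring]) (auto dest: subringE)

lemma add_minus_self: "a \<in> carrier R \<Longrightarrow> b \<in> carrier R \<Longrightarrow> b \<oplus> (a \<ominus> b) = a"
  by (simp add: a_minus_def add.m_lcomm r_neg)

lemma add_minus_cancel: "a \<in> carrier R \<Longrightarrow> b \<in> carrier R \<Longrightarrow> (a \<oplus> b) \<ominus> a = b"
  by (metis a_comm add_minus_self a_minus_def add.inv_closed add.m_assoc r_neg r_zero)

lemma lin_comb_closed: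
  "b \<in> I \<rightarrow> carrier R \<Longrightarrow> c \<in> I \<rightarrow> carrier R \<Longrightarrow> lin_comb R b c I \<in> carrier R"
  unfolding lin_comb_def by (auto intro: finsum_closed)

lemma lin_comb_mono_neutral:
  assumes "finite J" "I \<subseteq> J" "\<And>\<alpha>. \<alpha> \<in> J - I \<Longrightarrow> c \<alpha> = \<zero>"
    and "b \<in> J \<rightarrow> carrier R" "c \<in> J \<rightarrow> carrier R"
  shows "lin_comb R b c I = lin_comb R b c J"
  unfolding lin_comb_def
  by (rule add.finprod_mono_neutral_cong_left) (use assms in \<open>auto simp: Pi_iff\<close>)

lemma lin_comb_cong:
  assumes "\<And>\<alpha>. \<alpha> \<in> I \<Longrightarrow> c \<alpha> = d \<alpha>" "b \<in> I \<rightarrow> carrier R" "d \<in> I \<rightarrow> carrier R"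
  shows "lin_comb R b c I = lin_comb R b d I"
  unfolding lin_comb_def by (rule finsum_cong') (use assms in auto)

lemma lin_comb_add:
  assumes "b \<in> I \<rightarrow> carrier R" "c \<in> I \<rightarrow> carrier R" "d \<in> I \<rightarrow> carrier R"
  shows "lin_comb R b c I \<oplus> lin_comb R b d I = lin_comb R b (\<lambda>\<alpha>. c \<alpha> \<oplus> d \<alpha>) I"
proof -
  have "lin_comb R b (\<lambda>\<alpha>. c \<alpha> \<oplus> d \<alpha>) I = (\<Oplus>\<alpha>\<in>I. c \<alpha> \<otimes> b \<alpha> \<oplus> d \<alpha> \<otimes> b \<alpha>)"
    unfolding lin_comb_def by (rule finsum_cong') (use assms in \<open>auto simp: Pi_iff l_distr\<close>)
  also have "\<dots> = lin_comb R b c I \<oplus> lin_comb R b d I"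
    unfolding lin_comb_def by (rule finsum_addf) (use assms in \<open>auto simp: Pi_iff\<close>)
  finally show ?thesis by simp
qed

lemma lin_comb_smult:
  assumes "finite I" "r \<in> carrier R" "b \<in> I \<rightarrow> carrier R" "c \<in> I \<rightarrow> carrier R"
  shows "r \<otimes> lin_comb R b c I = lin_comb R b (\<lambda>\<alpha>. r \<otimes> c \<alpha>) I"
  unfolding lin_comb_def using assms
  by (subst finsum_rdistr) (auto intro!: finsum_cong' simp: Pi_iff m_assoc)

lemma lin_comb_minus:
  assumes "finite I" "b \<in> I \<rightarrow> carrier R" "c \<in> I \<rightarrow> carrier R" "d \<in> I \<rightarrow> carrier R"
  shows "lin_comb R b c I \<ominus> lin_comb R b d I = lin_comb R b (\<lambda>\<alpha>. c \<alpha> \<ominus> d \<alpha>) I"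
proof -
  have "lin_comb R b c I \<ominus> lin_comb R b d I = lin_comb R b c I \<oplus> \<ominus> \<one> \<otimes> lin_comb R b d I"
    using assms by (simp add: a_minus_def l_minus lin_comb_closed)
  also have "\<dots> = lin_comb R b (\<lambda>\<alpha>. c \<alpha> \<oplus> \<ominus> \<one> \<otimes> d \<alpha>) I"
    using assms by (simp add: lin_comb_smult lin_comb_add Pi_def)
  also have "\<dots> = lin_comb R b (\<lambda>\<alpha>. c \<alpha> \<ominus> d \<alpha>) I"
    using assms by (intro lin_comb_cong) (auto simp: Pi_iff a_minus_def l_minus)
  finally show ?thesis .
qed

lemma lin_comb_in_lin_combs:
  "finite I \<Longrightarrow> I \<subseteq> E \<Longrightarrow> \<forall>\<alpha>\<in>I. c \<alpha> \<in> K \<Longrightarrow> lin_comb R b c I \<in> lin_combs R K b E"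
  unfolding lin_combs_def by blast

lemma lin_combs_add:
  assumes K: "subring K R" and b: "b \<in> E \<rightarrow> carrier R"
    and a: "a \<in> lin_combs R K b E" and a': "a' \<in> lin_combs R K b E"
  shows "a \<oplus> a' \<in> lin_combs R K b E"
proof -
  obtain c I where I: "finite I" "I \<subseteq> E" "\<forall>\<alpha>\<in>I. c \<alpha> \<in> K" "a = lin_comb R b c I"
    using a unfolding lin_combs_def by blast
  obtain d J where J: "finite J" "J \<subseteq> E" "\<forall>\<alpha>\<in>J. d \<alpha> \<in> K" "a' = lin_comb R b d J"
    using a' unfolding lin_combs_def by blast
  define c' where "c' \<alpha> = (if \<alpha> \<in> I then c \<alpha> else \<zero>)" for \<alpha>
  define d' where "d' \<alpha> = (if \<alpha> \<in> J then d \<alpha> else \<zero>)" for \<alpha>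
  have KR: "K \<subseteq> carrier R" and K0: "\<zero> \<in> K"
    using subringE(1,2)[OF K] by auto
  have c': "c' \<in> I \<union> J \<rightarrow> K" and d': "d' \<in> I \<union> J \<rightarrow> K"
    using I J K0 by (auto simp: c'_def d'_def)
  have bIJ: "b \<in> I \<union> J \<rightarrow> carrier R" using b I J by auto
  have "a = lin_comb R b c' (I \<union> J)"
    using I J KR c' bIJ
    by (subst lin_comb_mono_neutral[symmetric, where I = I])
       (auto simp: c'_def intro!: lin_comb_cong)
  moreover have "a' = lin_comb R b d' (I \<union> J)"
    using I J KR d' bIJ
    by (subst lin_comb_mono_neutral[symmetric, where I = J])
       (auto simp: d'_def intro!: lin_comb_cong)
  ultimately have "a \<oplus> a' = lin_comb R b (\<lambda>\<alpha>. c' \<alpha> \<oplus> d' \<alpha>) (I \<union> J)"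
    using c' d' bIJ KR by (auto intro!: lin_comb_add)
  moreover have "\<forall>\<alpha>\<in>I \<union> J. c' \<alpha> \<oplus> d' \<alpha> \<in> K"
    using c' d' subringE(7)[OF K] by blast
  ultimately show ?thesis
    using I J by (auto intro!: lin_comb_in_lin_combs)
qed

lemma lin_comb_eq_support:
  assumes K: "subring K R" and b: "b \<in> I \<rightarrow> carrier R" and I: "finite I" and c: "\<forall>\<alpha>\<in>I. c \<alpha> \<in> K"
  defines "c' \<equiv> \<lambda>\<alpha>. if \<alpha> \<in> I then c \<alpha> else \<zero>"
  shows "lin_comb R b c I = lin_comb R b c' {\<alpha>. c' \<alpha> \<noteq> \<zero>}"
proof -
  have KR: "\<And>r. r \<in> K \<Longrightarrow> r \<in> carrier R" using subringE(1)[OF K] by blast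
  have "lin_comb R b c I = lin_comb R b c' I"
    using b c KR by (intro lin_comb_cong) (auto simp: c'_def)
  also have "\<dots> = lin_comb R b c' {\<alpha>. c' \<alpha> \<noteq> \<zero>}"
    by (rule lin_comb_mono_neutral[symmetric]) (use I b c KR in \<open>auto simp: c'_def\<close>)
  finally show ?thesis .
qed

lemma lin_comb_coeffs_eqI:
  assumes K: "subring K R" and b: "b \<in> E \<rightarrow> carrier R"
    and independent: "\<And>I c. finite I \<Longrightarrow> I \<subseteq> E \<Longrightarrow> \<forall>\<alpha>\<in>I. c \<alpha> \<in> K \<Longrightarrow>
        lin_comb R b c I = \<zero> \<Longrightarrow> \<forall>\<alpha>\<in>I. c \<alpha> = \<zero>"
    and c: "\<forall>\<alpha>. c \<alpha> \<in> K" "\<forall>\<alpha>. \<alpha> \<notin> E \<longrightarrow> c \<alpha> = \<zero>" "finite {\<alpha>. c \<alpha> \<noteq> \<zero>}"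
    and d: "\<forall>\<alpha>. d \<alpha> \<in> K" "\<forall>\<alpha>. \<alpha> \<notin> E \<longrightarrow> d \<alpha> = \<zero>" "finite {\<alpha>. d \<alpha> \<noteq> \<zero>}"
    and eq: "lin_comb R b c {\<alpha>. c \<alpha> \<noteq> \<zero>} = lin_comb R b d {\<alpha>. d \<alpha> \<noteq> \<zero>}"
  shows "c = d"
proof
  have KR: "\<And>r. r \<in> K \<Longrightarrow> r \<in> carrier R" using subringE(1)[OF K] by blast
  define U where "U = {\<alpha>. c \<alpha> \<noteq> \<zero>} \<union> {\<alpha>. d \<alpha> \<noteq> \<zero>}"
  have U: "finite U" "U \<subseteq> E" using c d by (auto simp: U_def)
  have bU: "b \<in> U \<rightarrow> carrier R" and cU: "c \<in> U \<rightarrow> carrier R" and dU: "d \<in> U \<rightarrow> carrier R"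
    using b U c d KR by auto
  have "lin_comb R b c {\<alpha>. c \<alpha> \<noteq> \<zero>} = lin_comb R b c U"
    by (rule lin_comb_mono_neutral[OF U(1) _ _ bU cU]) (auto simp: U_def)
  moreover have "lin_comb R b d {\<alpha>. d \<alpha> \<noteq> \<zero>} = lin_comb R b d U"
    by (rule lin_comb_mono_neutral[OF U(1) _ _ bU dU]) (auto simp: U_def)
  ultimately have same: "lin_comb R b c U = lin_comb R b d U"
    using eq by simp
  have "lin_comb R b (\<lambda>\<alpha>. c \<alpha> \<ominus> d \<alpha>) U = lin_comb R b c U \<ominus> lin_comb R b d U"
    by (rule lin_comb_minus[symmetric, OF U(1) bU cU dU])
  also have "\<dots> = \<zero>"
    using lin_comb_closed[OF bU dU] by (simp add: same a_minus_def r_neg)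
  finally have difference: "lin_comb R b (\<lambda>\<alpha>. c \<alpha> \<ominus> d \<alpha>) U = \<zero>" .
  have "\<forall>\<alpha>\<in>U. c \<alpha> \<ominus> d \<alpha> \<in> K"
    using c d subringE(7)[OF K] subringE(5)[OF K] by (simp add: a_minus_def)
  from independent[OF U this difference]
  have zero: "\<forall>\<alpha>\<in>U. c \<alpha> \<ominus> d \<alpha> = \<zero>" .
  fix \<alpha>
  show "c \<alpha> = d \<alpha>"
  proof (cases "\<alpha> \<in> U")
    case True
    then show ?thesis using zero c d KR r_right_minus_eq by metis
  next
    case False
    then show ?thesis by (simp add: U_def)
  qed
qed

lemma ex1_lin_comb_coeffs:
  assumes K: "subring K R" and b: "b \<in> E \<rightarrow> carrier R"
    and spanning: "carrier R \<subseteq> lin_combs R K b E"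
    and independent: "\<And>I c. finite I \<Longrightarrow> I \<subseteq> E \<Longrightarrow> \<forall>\<alpha>\<in>I. c \<alpha> \<in> K \<Longrightarrow>
        lin_comb R b c I = \<zero> \<Longrightarrow> \<forall>\<alpha>\<in>I. c \<alpha> = \<zero>"
    and a: "a \<in> carrier R"
  shows "\<exists>!c. (\<forall>\<alpha>. c \<alpha> \<in> K) \<and> (\<forall>\<alpha>. \<alpha> \<notin> E \<longrightarrow> c \<alpha> = \<zero>) \<and> finite {\<alpha>. c \<alpha> \<noteq> \<zero>} \<and>
           a = lin_comb R b c {\<alpha>. c \<alpha> \<noteq> \<zero>}"
    (is "\<exists>!c. ?coeffs c")
proof (rule ex_ex1I)
  have "a \<in> lin_combs R K b E" using spanning a ..
  then obtain c I where I: "finite I" "I \<subseteq> E" "\<forall>\<alpha>\<in>I. c \<alpha> \<in> K" "a = lin_comb R b c I"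
    unfolding lin_combs_def by blast
  define c' where "c' \<alpha> = (if \<alpha> \<in> I then c \<alpha> else \<zero>)" for \<alpha>
  have supp: "{\<alpha>. c' \<alpha> \<noteq> \<zero>} \<subseteq> I" by (auto simp: c'_def)
  have bI: "b \<in> I \<rightarrow> carrier R" by (rule subsetD[OF Pi_anti_mono[OF I(2)] b])
  have "a = lin_comb R b c' {\<alpha>. c' \<alpha> \<noteq> \<zero>}"
    unfolding I(4) c'_def by (rule lin_comb_eq_support[OF K bI I(1) I(3)])
  moreover have "finite {\<alpha>. c' \<alpha> \<noteq> \<zero>}" using finite_subset[OF supp I(1)] .
  moreover have "\<forall>\<alpha>. c' \<alpha> \<in> K" "\<forall>\<alpha>. \<alpha> \<notin> E \<longrightarrow> c' \<alpha> = \<zero>"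
    using I(2,3) subringE(2)[OF K] by (auto simp: c'_def)
  ultimately show "\<exists>c. ?coeffs c" by blast
next
  fix c d assume "?coeffs c" "?coeffs d"
  then show "c = d" by (intro lin_comb_coeffs_eqI[OF K b independent]) auto
qed

lemma lin_span_closed:
  "subring K R \<Longrightarrow> x \<in> {1..n} \<rightarrow> carrier R \<Longrightarrow> lin_span R K x n \<subseteq> carrier R"
  unfolding lin_span_def by (force dest: subringE(1) intro!: finsum_closed)

lemma lin_span_subset:
  assumes K: "subring K R" and S: "K \<subseteq> S" "S \<subseteq> carrier R"
    and gens: "\<And>k r. k \<in> {1..n} \<Longrightarrow> r \<in> K \<Longrightarrow> r \<otimes> x k \<in> S"
    and add: "\<And>a a'. a \<in> S \<Longrightarrow> a' \<in> S \<Longrightarrow> a \<oplus> a' \<in> S"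
  shows "lin_span R K x n \<subseteq> S"
proof
  fix p assume "p \<in> lin_span R K x n"
  then obtain r0 r where r: "r0 \<in> K" "\<forall>k\<in>{1..n}. r k \<in> K" "p = r0 \<oplus> (\<Oplus>k\<in>{1..n}. r k \<otimes> x k)"
    unfolding lin_span_def by blast
  have rS: "r k \<otimes> x k \<in> S" "r k \<otimes> x k \<in> carrier R" if "k \<in> {1..n}" for k
    using gens r that S by auto
  have "(\<Oplus>k\<in>F. r k \<otimes> x k) \<in> S" if "F \<subseteq> {1..n}" for F
    using finite_subset[OF that finite_atLeastAtMost] that
  proof (induction F rule: finite_induct)
    case empty
    then show ?case using S subringE(2)[OF K] by auto
  next
    case (insert k F)
    then show ?case using rS by (subst finsum_insert) (auto intro!: add)
  qed
  then show "p \<in> S" using r S by (auto intro!: add)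
qed

lemma subring_subset_lin_span:
  assumes K: "subring K R" and x: "x \<in> {1..n} \<rightarrow> carrier R"
  shows "K \<subseteq> lin_span R K x n"
proof
  fix r assume r: "r \<in> K"
  have "(\<Oplus>k\<in>{1..n}. \<zero> \<otimes> x k) = (\<Oplus>k\<in>{1..n}. \<zero>)"
    by (rule finsum_cong') (use x in \<open>auto simp: Pi_iff\<close>)
  then have "(\<Oplus>k\<in>{1..n}. \<zero> \<otimes> x k) = \<zero>"
    by simp
  then have "r = r \<oplus> (\<Oplus>k\<in>{1..n}. \<zero> \<otimes> x k)"
    using r subringE(1)[OF K] by auto
  then show "r \<in> lin_span R K x n"
    unfolding lin_span_def using r subringE(2)[OF K] by (auto intro!: exI[of _ r] exI[of _ "\<lambda>_. \<zero>"])
qed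

lemma smult_gen_in_lin_span:
  assumes K: "subring K R" and x: "x \<in> {1..n} \<rightarrow> carrier R" and k: "k \<in> {1..n}" and r: "r \<in> K"
  shows "r \<otimes> x k \<in> lin_span R K x n"
proof -
  define c where "c l = (if l = k then r else \<zero>)" for l
  have rR: "r \<in> carrier R" using r subringE(1)[OF K] by blast
  have xl: "x l \<in> carrier R" if "l \<in> {1..n}" for l using x that by blast
  have "(\<Oplus>l\<in>{1..n}. c l \<otimes> x l) = (\<Oplus>l\<in>{1..n}. if k = l then r \<otimes> x l else \<zero>)"
    by (rule finsum_cong') (use xl rR in \<open>auto simp: c_def\<close>)
  also have "\<dots> = r \<otimes> x k"
    by (rule finsum_singleton[OF k]) (use xl rR in auto)
  finally have "r \<otimes> x k = \<zero> \<oplus> (\<Oplus>l\<in>{1..n}. c l \<otimes> x l)"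
    using xl[OF k] rR by simp
  moreover have "\<zero> \<oplus> (\<Oplus>l\<in>{1..n}. c l \<otimes> x l) \<in> lin_span R K x n"
    unfolding lin_span_def using r subringE(2)[OF K]
    by (auto simp: c_def intro!: exI[of _ \<zero>] exI[of _ c])
  ultimately show ?thesis by simp
qed

lemma lin_span_add:
  assumes K: "subring K R" and x: "x \<in> {1..n} \<rightarrow> carrier R"
    and p: "p \<in> lin_span R K x n" and q: "q \<in> lin_span R K x n"
  shows "p \<oplus> q \<in> lin_span R K x n"
proof -
  have KR: "\<And>a. a \<in> K \<Longrightarrow> a \<in> carrier R" using subringE(1)[OF K] by blast
  have xk: "\<And>k. k \<in> {1..n} \<Longrightarrow> x k \<in> carrier R" using x by blast
  obtain r0 r where r: "r0 \<in> K" "\<forall>k\<in>{1..n}. r k \<in> K" "p = r0 \<oplus> (\<Oplus>k\<in>{1..n}. r k \<otimes> x k)"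
    using p unfolding lin_span_def by blast
  obtain s0 s where s: "s0 \<in> K" "\<forall>k\<in>{1..n}. s k \<in> K" "q = s0 \<oplus> (\<Oplus>k\<in>{1..n}. s k \<otimes> x k)"
    using q unfolding lin_span_def by blast
  have "(\<Oplus>k\<in>{1..n}. (r k \<oplus> s k) \<otimes> x k) = (\<Oplus>k\<in>{1..n}. r k \<otimes> x k \<oplus> s k \<otimes> x k)"
    by (rule finsum_cong') (use r s xk KR in \<open>auto simp: l_distr\<close>)
  also have "\<dots> = (\<Oplus>k\<in>{1..n}. r k \<otimes> x k) \<oplus> (\<Oplus>k\<in>{1..n}. s k \<otimes> x k)"
    by (rule finsum_addf) (use r s xk KR in auto)
  moreover have "(\<Oplus>k\<in>{1..n}. r k \<otimes> x k) \<in> carrier R" "(\<Oplus>k\<in>{1..n}. s k \<otimes> x k) \<in> carrier R"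
    using r s xk KR by (auto intro!: finsum_closed)
  ultimately have "p \<oplus> q = (r0 \<oplus> s0) \<oplus> (\<Oplus>k\<in>{1..n}. (r k \<oplus> s k) \<otimes> x k)"
    unfolding r(3) s(3) using r(1) s(1) KR by (simp add: a_ac)
  then show ?thesis
    unfolding lin_span_def using r s subringE(7)[OF K]
    by (auto intro!: exI[of _ "r0 \<oplus> s0"] exI[of _ "\<lambda>k. r k \<oplus> s k"])
qed

lemma lin_span_uminus:
  assumes K: "subring K R" and x: "x \<in> {1..n} \<rightarrow> carrier R" and p: "p \<in> lin_span R K x n"
  shows "\<ominus> p \<in> lin_span R K x n"
proof -
  have KR: "\<And>r. r \<in> K \<Longrightarrow> r \<in> carrier R" using subringE(1)[OF K] by blast
  have "lin_span R K x n \<subseteq> {p \<in> carrier R. \<ominus> p \<in> lin_span R K x n}"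
  proof (rule lin_span_subset[OF K])
    show "K \<subseteq> {p \<in> carrier R. \<ominus> p \<in> lin_span R K x n}"
      using subring_subset_lin_span[OF K x] subringE(5)[OF K] KR by blast
    show "r \<otimes> x k \<in> {p \<in> carrier R. \<ominus> p \<in> lin_span R K x n}" if "k \<in> {1..n}" "r \<in> K" for k r
    proof -
      have xk: "x k \<in> carrier R" using x that(1) by blast
      have "\<ominus> r \<otimes> x k \<in> lin_span R K x n"
        by (rule smult_gen_in_lin_span[OF K x that(1) subringE(5)[OF K that(2)]])
      then show ?thesis using xk KR[OF that(2)] by (simp add: l_minus)
    qed
    show "a \<oplus> a' \<in> {p \<in> carrier R. \<ominus> p \<in> lin_span R K x n}"
      if "a \<in> {p \<in> carrier R. \<ominus> p \<in> lin_span R K x n}" "a' \<in> {p \<in> carrier R. \<ominus> p \<in> lin_span R K x n}" for a a'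
      using that by (auto simp: minus_add intro: lin_span_add[OF K x])
  qed auto
  then show ?thesis using p by blast
qed

end

section \<open>Bijective skew PBW extensions\<close>

locale bijective_skew_PBW_maps =
  fixes A :: "('a, 'b) ring_scheme" (structure)
    and R :: "'a set" and x :: "nat \<Rightarrow> 'a" and n :: nat and \<sigma> \<delta> :: "nat \<Rightarrow> 'a \<Rightarrow> 'a"
  assumes bijective: "bijective_skew_PBW A R x n"
    and maps: "assoc_maps A R x n \<sigma> \<delta>"

sublocale bijective_skew_PBW_maps \<subseteq> ring A
  using bijective by (simp add: bijective_skew_PBW_def skew_PBW_def)

context bijective_skew_PBW_maps
begin

sublocale opp: ring "opp_ring A"
  by (rule ring_opp_ring)

abbreviation xmon :: "(nat \<Rightarrow> nat) \<Rightarrow> 'a" where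
  "xmon \<equiv> mon A x n"

abbreviation op_mon :: "(nat \<Rightarrow> nat) \<Rightarrow> 'a" where
  "op_mon \<equiv> mon (opp_ring A) x n"

lemma subring_R: "subring R A"
  using bijective by (simp add: bijective_skew_PBW_def skew_PBW_def)

lemma subring_R_opp: "subring R (opp_ring A)"
  by (rule subring_opp_ring[OF subring_R])

lemma x_closed: "x \<in> {1..n} \<rightarrow> carrier A"
  using bijective by (simp add: bijective_skew_PBW_def skew_PBW_def)

lemma x_in_carrier [simp]: "i \<in> {1..n} \<Longrightarrow> x i \<in> carrier A"
  using x_closed by blast

lemma R_carrier [simp]: "r \<in> R \<Longrightarrow> r \<in> carrier A"
  using subringE(1)[OF subring_R] by blast

lemma zero_in_R [simp]: "\<zero> \<in> R" and one_in_R [simp]: "\<one> \<in> R"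
  using subringE(2,3)[OF subring_R] by auto

lemma R_m_closed [intro, simp]: "r \<in> R \<Longrightarrow> s \<in> R \<Longrightarrow> r \<otimes> s \<in> R"
  and R_a_closed [intro, simp]: "r \<in> R \<Longrightarrow> s \<in> R \<Longrightarrow> r \<oplus> s \<in> R"
  and R_a_inv_closed [intro, simp]: "r \<in> R \<Longrightarrow> \<ominus> r \<in> R"
  using subringE(5-7)[OF subring_R] by auto

lemma free_basis:
  "a \<in> carrier A \<Longrightarrow> \<exists>!c. (\<forall>\<alpha>. c \<alpha> \<in> R) \<and> (\<forall>\<alpha>. \<alpha> \<notin> exps n \<longrightarrow> c \<alpha> = \<zero>) \<and>
     finite {\<alpha>. c \<alpha> \<noteq> \<zero>} \<and> a = lin_comb A xmon c {\<alpha>. c \<alpha> \<noteq> \<zero>}"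
  using bijective by (simp add: bijective_skew_PBW_def skew_PBW_def lin_comb_def)

lemma commutation:
  "i \<in> {1..n} \<Longrightarrow> j \<in> {1..n} \<Longrightarrow> \<exists>c\<in>R - {\<zero>}. x j \<otimes> x i \<ominus> c \<otimes> x i \<otimes> x j \<in> lin_span A R x n"
  using bijective by (simp add: bijective_skew_PBW_def skew_PBW_def)

lemma sigma_bij: "i \<in> {1..n} \<Longrightarrow> bij_betw (\<sigma> i) R R"
  by (rule bijective[unfolded bijective_skew_PBW_def, THEN conjunct2, THEN conjunct1,
        rule_format, OF maps])

lemma sigma_closed [intro, simp]: "i \<in> {1..n} \<Longrightarrow> r \<in> R \<Longrightarrow> \<sigma> i r \<in> R"
  and delta_closed [intro, simp]: "i \<in> {1..n} \<Longrightarrow> r \<in> R \<Longrightarrow> \<delta> i r \<in> R"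
  and x_mult_R: "i \<in> {1..n} \<Longrightarrow> r \<in> R \<Longrightarrow> x i \<otimes> r = \<sigma> i r \<otimes> x i \<oplus> \<delta> i r"
  using maps by (auto simp: assoc_maps_def)

definition R_units :: "'a set" where
  "R_units = {u \<in> R. \<exists>v\<in>R. u \<otimes> v = \<one> \<and> v \<otimes> u = \<one>}"

lemma commutation_coeff_unit:
  assumes "i \<in> {1..n}" "j \<in> {1..n}" "i < j" "c \<in> R - {\<zero>}"
    and "x j \<otimes> x i \<ominus> c \<otimes> x i \<otimes> x j \<in> lin_span A R x n"
  shows "c \<in> R_units"
proof -
  have "\<exists>d\<in>R. c \<otimes> d = \<one> \<and> d \<otimes> c = \<one>"
    by (rule bijective[unfolded bijective_skew_PBW_def, THEN conjunct2, THEN conjunct2,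
          rule_format, OF assms(1,2,4,3,5)])
  then show ?thesis
    using assms(4) by (simp add: R_units_def)
qed

lemma R_units_in_R: "u \<in> R_units \<Longrightarrow> u \<in> R"
  by (simp add: R_units_def)

lemma one_in_R_units [simp]: "\<one> \<in> R_units"
  by (auto simp: R_units_def)

lemma R_units_mult [intro]:
  assumes "u \<in> R_units" "v \<in> R_units"
  shows "u \<otimes> v \<in> R_units"
proof -
  obtain u' v' where inv: "u \<in> R" "v \<in> R" "u' \<in> R" "v' \<in> R"
    "u \<otimes> u' = \<one>" "u' \<otimes> u = \<one>" "v \<otimes> v' = \<one>" "v' \<otimes> v = \<one>"
    using assms by (auto simp: R_units_def)
  have "u \<otimes> v \<otimes> (v' \<otimes> u') = u \<otimes> (v \<otimes> v') \<otimes> u'"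
    and "v' \<otimes> u' \<otimes> (u \<otimes> v) = v' \<otimes> (u' \<otimes> u) \<otimes> v"
    using inv(1-4) by (simp_all add: m_assoc)
  then have "u \<otimes> v \<otimes> (v' \<otimes> u') = \<one>" "v' \<otimes> u' \<otimes> (u \<otimes> v) = \<one>"
    using inv by simp_all
  then show ?thesis
    using inv unfolding R_units_def by (auto intro!: bexI[of _ "v' \<otimes> u'"])
qed

lemma R_units_left_inverse:
  assumes u: "u \<in> R_units" and s: "s \<in> R" and su: "s \<otimes> u = \<one>"
  shows "s \<in> R_units"
proof -
  obtain v where v: "v \<in> R" "u \<otimes> v = \<one>"
    using u by (auto simp: R_units_def)
  have "s = v"
    using s v su u by (metis R_carrier R_units_in_R l_one m_assoc r_one)
  then show ?thesis
    using u s su v by (auto simp: R_units_def)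
qed

lemma bij_betw_R_units_mult:
  assumes "u \<in> R_units"
  shows "bij_betw (\<lambda>s. u \<otimes> s) R R"
proof -
  obtain v where v: "v \<in> R" "u \<otimes> v = \<one>" "v \<otimes> u = \<one>"
    using assms by (auto simp: R_units_def)
  show ?thesis
    by (rule bij_betw_byWitness[where f' = "\<lambda>s. v \<otimes> s"])
      (use R_units_in_R[OF assms] v in \<open>auto simp flip: m_assoc\<close>)
qed

lemma foldr_pow_closed:
  "set L \<subseteq> {1..n} \<Longrightarrow> foldr (\<lambda>i acc. x i [^] (\<alpha> i :: nat) \<otimes> acc) L \<one> \<in> carrier A"
  by (induction L) auto

lemma mon_closed [simp]: "xmon \<alpha> \<in> carrier A"
  unfolding mon_def by (rule foldr_pow_closed) auto

lemma mon_zero: "xmon (\<lambda>_. 0) = \<one>"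
proof -
  have "foldr (\<lambda>i acc. x i [^] (0::nat) \<otimes> acc) L \<one> = \<one>" for L
    by (induction L) auto
  then show ?thesis
    unfolding mon_def by (simp del: upt_Suc)
qed

lemma mon_split_at:
  assumes k: "k \<in> {1..n}" and below: "\<forall>l<k. \<beta> l = 0"
  shows "xmon \<beta> = x k [^] \<beta> k \<otimes> foldr (\<lambda>i acc. x i [^] \<beta> i \<otimes> acc) [Suc k..<Suc n] \<one>"
proof -
  let ?f = "\<lambda>i acc. x i [^] \<beta> i \<otimes> acc"
  have "[1..<Suc n] = [1..<k] @ [k..<Suc n]"
    using k upt_add_eq_append[of 1 k "Suc n - k"] by auto
  also have "[k..<Suc n] = k # [Suc k..<Suc n]"
    using k upt_conv_Cons by auto
  finally have split: "[1..<Suc n] = [1..<k] @ k # [Suc k..<Suc n]" .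
  have skip: "foldr ?f L a = a" if "set L \<subseteq> {..<k}" "a \<in> carrier A" for L a
    using that below by (induction L) auto
  have "xmon \<beta> = foldr ?f [1..<k] (x k [^] \<beta> k \<otimes> foldr ?f [Suc k..<Suc n] \<one>)"
    unfolding mon_def split by simp
  also have "\<dots> = x k [^] \<beta> k \<otimes> foldr ?f [Suc k..<Suc n] \<one>"
    using k by (intro skip m_closed nat_pow_closed x_in_carrier foldr_pow_closed) auto
  finally show ?thesis .
qed

lemma x_mult_mon:
  assumes k: "k \<in> {1..n}" and below: "\<forall>l<k. \<beta> l = 0"
  shows "x k \<otimes> xmon \<beta> = xmon (\<beta>(k := Suc (\<beta> k)))"
proof -
  let ?tail = "\<lambda>\<alpha>. foldr (\<lambda>i acc. x i [^] (\<alpha> i :: nat) \<otimes> acc) [Suc k..<Suc n] \<one>"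
  have tail: "?tail (\<beta>(k := Suc (\<beta> k))) = ?tail \<beta>"
    by (rule foldr_cong) auto
  have tail_closed: "?tail \<beta> \<in> carrier A"
    by (intro foldr_pow_closed) auto
  have "x k \<otimes> xmon \<beta> = (x k \<otimes> x k [^] \<beta> k) \<otimes> ?tail \<beta>"
    using mon_split_at[OF k below] k tail_closed by (simp add: m_assoc)
  also have "\<dots> = x k [^] Suc (\<beta> k) \<otimes> ?tail \<beta>"
    by (simp only: nat_pow_Suc2[OF x_in_carrier[OF k]])
  also have "\<dots> = xmon (\<beta>(k := Suc (\<beta> k)))"
    using mon_split_at[OF k, of "\<beta>(k := Suc (\<beta> k))"] below by (simp only: fun_upd_same tail) simp
  finally show ?thesis .
qed

lemma x_eq_mon: "i \<in> {1..n} \<Longrightarrow> x i = xmon ((\<lambda>_. 0)(i := 1))"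
  using x_mult_mon[of i "\<lambda>_. 0"] by (simp add: mon_zero)

definition total_deg :: "(nat \<Rightarrow> nat) \<Rightarrow> nat" where
  "total_deg \<alpha> = (\<Sum>i\<in>{1..n}. \<alpha> i)"

lemma exps_fun_upd [intro]: "\<beta> \<in> exps n \<Longrightarrow> k \<in> {1..n} \<Longrightarrow> \<beta>(k := v) \<in> exps n"
  unfolding exps_def by auto

lemma zero_in_exps [simp]: "(\<lambda>_. 0) \<in> exps n"
  unfolding exps_def by auto

lemma total_deg_zero [simp]: "total_deg (\<lambda>_. 0) = 0"
  unfolding total_deg_def by simp

lemma total_deg_Suc:
  "k \<in> {1..n} \<Longrightarrow> total_deg (\<beta>(k := Suc (\<beta> k))) = Suc (total_deg \<beta>)"
  unfolding total_deg_def by (simp add: sum.remove)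

lemma total_deg_eq_0_iff: "\<beta> \<in> exps n \<Longrightarrow> total_deg \<beta> = 0 \<longleftrightarrow> \<beta> = (\<lambda>_. 0)"
  unfolding total_deg_def exps_def by (auto simp: fun_eq_iff)

lemma exps_split_least:
  assumes \<beta>: "\<beta> \<in> exps n" and nonzero: "\<beta> \<noteq> (\<lambda>_. 0)"
  obtains k \<gamma> where "k \<in> {1..n}" "\<gamma> \<in> exps n" "\<forall>l<k. \<beta> l = 0" "\<beta> = \<gamma>(k := Suc (\<gamma> k))"
proof -
  obtain l where "\<beta> l \<noteq> 0" using nonzero by auto
  define k where "k = (LEAST l. \<beta> l \<noteq> 0)"
  have k: "\<beta> k \<noteq> 0"
    unfolding k_def by (rule LeastI) fact
  have below: "\<forall>l<k. \<beta> l = 0"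
    unfolding k_def using not_less_Least by blast
  have "k \<in> {1..n}"
  proof (rule ccontr)
    assume "k \<notin> {1..n}"
    with \<beta> have "\<beta> k = 0" unfolding exps_def by simp
    with k show False ..
  qed
  moreover have "\<beta> = (\<beta>(k := \<beta> k - 1))(k := Suc ((\<beta>(k := \<beta> k - 1)) k))"
    using k by (simp add: fun_eq_iff)
  ultimately show ?thesis
    using that[of k "\<beta>(k := \<beta> k - 1)"] \<beta> below by blast
qed

definition mon_coeff :: "'a \<Rightarrow> (nat \<Rightarrow> nat) \<Rightarrow> 'a" where
  "mon_coeff a = (THE c. (\<forall>\<alpha>. c \<alpha> \<in> R) \<and> (\<forall>\<alpha>. \<alpha> \<notin> exps n \<longrightarrow> c \<alpha> = \<zero>) \<and>
     finite {\<alpha>. c \<alpha> \<noteq> \<zero>} \<and> a = lin_comb A xmon c {\<alpha>. c \<alpha> \<noteq> \<zero>})"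

lemma
  assumes "a \<in> carrier A"
  shows mon_coeff_in_R [intro, simp]: "mon_coeff a \<alpha> \<in> R"
    and mon_coeff_outside_exps: "\<alpha> \<notin> exps n \<Longrightarrow> mon_coeff a \<alpha> = \<zero>"
    and finite_mon_coeff_support: "finite {\<alpha>. mon_coeff a \<alpha> \<noteq> \<zero>}"
    and lin_comb_mon_coeff: "a = lin_comb A xmon (mon_coeff a) {\<alpha>. mon_coeff a \<alpha> \<noteq> \<zero>}"
  using theI'[OF free_basis[OF assms]] unfolding mon_coeff_def[symmetric] by auto

lemma mon_coeff_closed [simp]: "a \<in> carrier A \<Longrightarrow> mon_coeff a \<alpha> \<in> carrier A"
  using mon_coeff_in_R by simp

lemma mon_coeff_support_exps: "a \<in> carrier A \<Longrightarrow> {\<alpha>. mon_coeff a \<alpha> \<noteq> \<zero>} \<subseteq> exps n"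
  using mon_coeff_outside_exps by blast

lemma lin_comb_mon_coeff_superset:
  assumes "a \<in> carrier A" "finite I" "{\<alpha>. mon_coeff a \<alpha> \<noteq> \<zero>} \<subseteq> I"
  shows "a = lin_comb A xmon (mon_coeff a) I"
proof -
  have "lin_comb A xmon (mon_coeff a) {\<alpha>. mon_coeff a \<alpha> \<noteq> \<zero>} = lin_comb A xmon (mon_coeff a) I"
    by (rule lin_comb_mono_neutral) (use assms mon_coeff_in_R in auto)
  then show ?thesis
    using lin_comb_mon_coeff[OF assms(1)] by simp
qed

lemma mon_coeff_lin_comb:
  assumes I: "finite I" "I \<subseteq> exps n" and c: "\<forall>\<alpha>\<in>I. c \<alpha> \<in> R"
  shows "mon_coeff (lin_comb A xmon c I) = (\<lambda>\<alpha>. if \<alpha> \<in> I then c \<alpha> else \<zero>)"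
proof -
  let ?c' = "\<lambda>\<alpha>. if \<alpha> \<in> I then c \<alpha> else \<zero>"
  have closed: "lin_comb A xmon c I \<in> carrier A"
    using c by (auto intro: lin_comb_closed)
  have "lin_comb A xmon c I = lin_comb A xmon ?c' {\<alpha>. ?c' \<alpha> \<noteq> \<zero>}"
    by (rule lin_comb_eq_support[OF subring_R _ I(1) c]) simp
  moreover have "finite {\<alpha>. ?c' \<alpha> \<noteq> \<zero>}"
    by (rule finite_subset[OF _ I(1)]) auto
  ultimately show ?thesis
    unfolding mon_coeff_def using I c
    by (intro the1_equality[OF free_basis[OF closed]]) auto
qed

lemma mon_coeff_eqI: "a \<in> carrier A \<Longrightarrow> b \<in> carrier A \<Longrightarrow> mon_coeff a = mon_coeff b \<Longrightarrow> a = b"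
  using lin_comb_mon_coeff by metis

lemma mon_coeff_zero [simp]: "mon_coeff \<zero> \<alpha> = \<zero>"
  using mon_coeff_lin_comb[of "{}" "\<lambda>_. \<zero>"] by (simp add: lin_comb_def)

lemma mon_coeff_mon: "\<beta> \<in> exps n \<Longrightarrow> mon_coeff (xmon \<beta>) \<alpha> = (if \<alpha> = \<beta> then \<one> else \<zero>)"
  using mon_coeff_lin_comb[of "{\<beta>}" "\<lambda>_. \<one>"] by (simp add: lin_comb_def)

lemma mon_coeff_add:
  assumes a: "a \<in> carrier A" and b: "b \<in> carrier A"
  shows "mon_coeff (a \<oplus> b) \<alpha> = mon_coeff a \<alpha> \<oplus> mon_coeff b \<alpha>"
proof -
  define U where "U = {\<alpha>. mon_coeff a \<alpha> \<noteq> \<zero>} \<union> {\<alpha>. mon_coeff b \<alpha> \<noteq> \<zero>}"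
  have U: "finite U" "U \<subseteq> exps n"
    using a b finite_mon_coeff_support mon_coeff_support_exps by (auto simp: U_def)
  have "a \<oplus> b = lin_comb A xmon (mon_coeff a) U \<oplus> lin_comb A xmon (mon_coeff b) U"
    using a b U by (simp flip: lin_comb_mon_coeff_superset add: U_def)
  also have "\<dots> = lin_comb A xmon (\<lambda>\<alpha>. mon_coeff a \<alpha> \<oplus> mon_coeff b \<alpha>) U"
    using a b by (intro lin_comb_add) auto
  finally have "mon_coeff (a \<oplus> b) = (\<lambda>\<alpha>. if \<alpha> \<in> U then mon_coeff a \<alpha> \<oplus> mon_coeff b \<alpha> else \<zero>)"
    using a b U by (simp add: mon_coeff_lin_comb)
  then show ?thesis
    using a b by (auto simp: U_def)
qed

lemma mon_coeff_smult:
  assumes r: "r \<in> R" and a: "a \<in> carrier A"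
  shows "mon_coeff (r \<otimes> a) \<alpha> = r \<otimes> mon_coeff a \<alpha>"
proof -
  define U where "U = {\<alpha>. mon_coeff a \<alpha> \<noteq> \<zero>}"
  have U: "finite U" "U \<subseteq> exps n"
    using a finite_mon_coeff_support mon_coeff_support_exps by (auto simp: U_def)
  have "r \<otimes> a = r \<otimes> lin_comb A xmon (mon_coeff a) U"
    using lin_comb_mon_coeff[OF a] by (simp add: U_def)
  also have "\<dots> = lin_comb A xmon (\<lambda>\<alpha>. r \<otimes> mon_coeff a \<alpha>) U"
    using r a U by (intro lin_comb_smult) auto
  finally have "r \<otimes> a = lin_comb A xmon (\<lambda>\<alpha>. r \<otimes> mon_coeff a \<alpha>) U" .
  then have "mon_coeff (r \<otimes> a) = (\<lambda>\<alpha>. if \<alpha> \<in> U then r \<otimes> mon_coeff a \<alpha> else \<zero>)"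
    using r a U by (simp add: mon_coeff_lin_comb)
  then show ?thesis
    using r a by (auto simp: U_def)
qed

lemma mon_coeff_uminus: "a \<in> carrier A \<Longrightarrow> mon_coeff (\<ominus> a) \<alpha> = \<ominus> mon_coeff a \<alpha>"
  using mon_coeff_smult[OF R_a_inv_closed[OF one_in_R]] by (simp add: l_minus)

section \<open>The degree filtration and leading terms\<close>

definition deg_below :: "nat \<Rightarrow> 'a set" where
  "deg_below m = {a \<in> carrier A. \<forall>\<alpha>. m \<le> total_deg \<alpha> \<longrightarrow> mon_coeff a \<alpha> = \<zero>}"

lemma deg_below_closed: "a \<in> deg_below m \<Longrightarrow> a \<in> carrier A"
  by (simp add: deg_below_def)

lemma zero_in_deg_below [simp]: "\<zero> \<in> deg_below m"
  by (simp add: deg_below_def)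

lemma deg_below_add: "a \<in> deg_below m \<Longrightarrow> b \<in> deg_below m \<Longrightarrow> a \<oplus> b \<in> deg_below m"
  by (simp add: deg_below_def mon_coeff_add)

lemma deg_below_uminus: "a \<in> deg_below m \<Longrightarrow> \<ominus> a \<in> deg_below m"
  by (simp add: deg_below_def mon_coeff_uminus)

lemma deg_below_minus: "a \<in> deg_below m \<Longrightarrow> b \<in> deg_below m \<Longrightarrow> a \<ominus> b \<in> deg_below m"
  unfolding a_minus_def by (intro deg_below_add deg_below_uminus)

lemma deg_below_smult: "r \<in> R \<Longrightarrow> a \<in> deg_below m \<Longrightarrow> r \<otimes> a \<in> deg_below m"
  by (simp add: deg_below_def mon_coeff_smult)

lemma deg_below_mono: "a \<in> deg_below m \<Longrightarrow> m \<le> m' \<Longrightarrow> a \<in> deg_below m'"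
  by (auto simp: deg_below_def)

lemma smult_mon_in_deg_below:
  "r \<in> R \<Longrightarrow> \<beta> \<in> exps n \<Longrightarrow> total_deg \<beta> < m \<Longrightarrow> r \<otimes> xmon \<beta> \<in> deg_below m"
  by (auto simp: deg_below_def mon_coeff_smult mon_coeff_mon)

lemma R_in_deg_below: "r \<in> R \<Longrightarrow> 0 < m \<Longrightarrow> r \<in> deg_below m"
  using smult_mon_in_deg_below[of r "\<lambda>_. 0" m] by (simp add: mon_zero)

lemma finsum_in_deg_below:
  "finite I \<Longrightarrow> (\<And>\<alpha>. \<alpha> \<in> I \<Longrightarrow> f \<alpha> \<in> deg_below m) \<Longrightarrow> (\<Oplus>\<alpha>\<in>I. f \<alpha>) \<in> deg_below m"
proof (induction I rule: finite_induct)
  case (insert \<alpha> I)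
  then show ?case
    by (subst finsum_insert) (auto intro: deg_below_add deg_below_closed)
qed simp

lemma deg_below_0: "a \<in> deg_below 0 \<Longrightarrow> a = \<zero>"
  by (rule mon_coeff_eqI) (auto simp: deg_below_def)

lemma deg_below_induct [consumes 1, case_names zero add monom]:
  assumes a: "a \<in> deg_below m"
    and zero: "P \<zero>"
    and add: "\<And>a b. a \<in> carrier A \<Longrightarrow> b \<in> carrier A \<Longrightarrow> P a \<Longrightarrow> P b \<Longrightarrow> P (a \<oplus> b)"
    and monom: "\<And>r \<alpha>. r \<in> R \<Longrightarrow> \<alpha> \<in> exps n \<Longrightarrow> total_deg \<alpha> < m \<Longrightarrow> P (r \<otimes> xmon \<alpha>)"
  shows "P a"
proof -
  let ?S = "{\<alpha>. mon_coeff a \<alpha> \<noteq> \<zero>}"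
  have ac: "a \<in> carrier A" using a by (rule deg_below_closed)
  have S: "\<alpha> \<in> exps n" "total_deg \<alpha> < m" if "\<alpha> \<in> ?S" for \<alpha>
    using that a mon_coeff_outside_exps[OF ac] by (auto simp: deg_below_def not_less[symmetric])
  have "P (\<Oplus>\<alpha>\<in>F. mon_coeff a \<alpha> \<otimes> xmon \<alpha>)" if "F \<subseteq> ?S" for F
    using finite_subset[OF that finite_mon_coeff_support[OF ac]] that
  proof (induction F rule: finite_induct)
    case (insert \<alpha> F)
    then show ?case
      using ac S by (subst finsum_insert) (auto intro!: add monom finsum_closed)
  qed (simp add: zero)
  then have "P (\<Oplus>\<alpha>\<in>?S. mon_coeff a \<alpha> \<otimes> xmon \<alpha>)" by blast
  then show ?thesis
    by (subst lin_comb_mon_coeff[OF ac]) (simp add: lin_comb_def)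
qed

definition has_leading_term :: "'a \<Rightarrow> 'a \<Rightarrow> (nat \<Rightarrow> nat) \<Rightarrow> bool" where
  "has_leading_term a u \<alpha> \<longleftrightarrow> (\<exists>g\<in>deg_below (total_deg \<alpha>). a = u \<otimes> xmon \<alpha> \<oplus> g)"

lemma has_leading_termI:
  "g \<in> deg_below (total_deg \<alpha>) \<Longrightarrow> a = u \<otimes> xmon \<alpha> \<oplus> g \<Longrightarrow> has_leading_term a u \<alpha>"
  unfolding has_leading_term_def by blast

lemma has_leading_term_mon: "u \<in> R \<Longrightarrow> has_leading_term (u \<otimes> xmon \<alpha>) u \<alpha>"
  by (rule has_leading_termI[OF zero_in_deg_below]) simp

lemma mon_coeff_leading:
  assumes "has_leading_term a u \<alpha>" "\<alpha> \<in> exps n" "u \<in> R"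
  shows "mon_coeff a \<alpha> = u"
proof -
  obtain g where "g \<in> deg_below (total_deg \<alpha>)" "a = u \<otimes> xmon \<alpha> \<oplus> g"
    using assms(1) unfolding has_leading_term_def by blast
  then show ?thesis
    using assms(2,3) by (auto simp: mon_coeff_add mon_coeff_smult mon_coeff_mon deg_below_def)
qed

lemma leading_coeff_unique:
  "has_leading_term a u \<alpha> \<Longrightarrow> has_leading_term a v \<alpha> \<Longrightarrow> \<alpha> \<in> exps n \<Longrightarrow> u \<in> R \<Longrightarrow> v \<in> R \<Longrightarrow> u = v"
  using mon_coeff_leading by metis

lemma has_leading_term_in_deg_below:
  assumes "has_leading_term a u \<alpha>" "\<alpha> \<in> exps n" "u \<in> R"
  shows "a \<in> deg_below (Suc (total_deg \<alpha>))"
proof -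
  obtain g where "g \<in> deg_below (total_deg \<alpha>)" "a = u \<otimes> xmon \<alpha> \<oplus> g"
    using assms(1) unfolding has_leading_term_def by blast
  then show ?thesis
    using assms(2,3) by (auto intro!: deg_below_add smult_mon_in_deg_below elim: deg_below_mono)
qed

lemma has_leading_term_smult:
  assumes "has_leading_term a u \<alpha>" "r \<in> R" "u \<in> R"
  shows "has_leading_term (r \<otimes> a) (r \<otimes> u) \<alpha>"
proof -
  obtain g where g: "g \<in> deg_below (total_deg \<alpha>)" "a = u \<otimes> xmon \<alpha> \<oplus> g"
    using assms(1) unfolding has_leading_term_def by blast
  then have "r \<otimes> a = (r \<otimes> u) \<otimes> xmon \<alpha> \<oplus> r \<otimes> g"
    using assms(2,3) by (simp add: r_distr m_assoc deg_below_closed)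
  then show ?thesis
    using g assms(2) by (intro has_leading_termI[OF deg_below_smult])
qed

lemma has_leading_term_add_lower:
  assumes "has_leading_term a u \<alpha>" "h \<in> deg_below (total_deg \<alpha>)" "u \<in> R"
  shows "has_leading_term (a \<oplus> h) u \<alpha>"
proof -
  obtain g where g: "g \<in> deg_below (total_deg \<alpha>)" "a = u \<otimes> xmon \<alpha> \<oplus> g"
    using assms(1) unfolding has_leading_term_def by blast
  then have "a \<oplus> h = u \<otimes> xmon \<alpha> \<oplus> (g \<oplus> h)"
    using assms(2,3) by (simp add: a_assoc deg_below_closed)
  then show ?thesis
    using g assms(2) by (intro has_leading_termI[OF deg_below_add])
qed

lemma x_smult_plus_R_unique:
  assumes i: "i \<in> {1..n}" and "r \<in> R" "g \<in> R" "s \<in> R" "h \<in> R"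
    and eq: "r \<otimes> x i \<oplus> g = s \<otimes> x i \<oplus> h"
  shows "r = s"
proof (rule leading_coeff_unique)
  let ?e = "(\<lambda>_. 0)(i := 1)"
  have deg: "total_deg ?e = 1"
    using total_deg_Suc[OF i, of "\<lambda>_. 0"] by simp
  show "has_leading_term (r \<otimes> x i \<oplus> g) r ?e"
    using assms deg by (intro has_leading_termI[of g]) (auto intro: R_in_deg_below simp: x_eq_mon)
  show "has_leading_term (r \<otimes> x i \<oplus> g) s ?e"
    unfolding eq using assms deg by (intro has_leading_termI[of h]) (auto intro: R_in_deg_below simp: x_eq_mon)
qed (use assms in auto)

lemma x_mult_smult:
  "i \<in> {1..n} \<Longrightarrow> r \<in> R \<Longrightarrow> b \<in> carrier A \<Longrightarrow> x i \<otimes> (r \<otimes> b) = \<sigma> i r \<otimes> (x i \<otimes> b) \<oplus> \<delta> i r \<otimes> b"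
  by (simp add: x_mult_R l_distr sigma_closed delta_closed flip: m_assoc)

lemma sigma_zero: "i \<in> {1..n} \<Longrightarrow> \<sigma> i \<zero> = \<zero>"
  by (rule x_smult_plus_R_unique[of i _ "\<delta> i \<zero>" _ \<zero>]) (auto simp flip: x_mult_R)

lemma sigma_one: "i \<in> {1..n} \<Longrightarrow> \<sigma> i \<one> = \<one>"
  by (rule x_smult_plus_R_unique[of i _ "\<delta> i \<one>" _ \<zero>]) (auto simp flip: x_mult_R)

lemma sigma_mult:
  assumes i: "i \<in> {1..n}" and r: "r \<in> R" and s: "s \<in> R"
  shows "\<sigma> i (r \<otimes> s) = \<sigma> i r \<otimes> \<sigma> i s"
proof (rule x_smult_plus_R_unique[OF i])
  have "\<sigma> i (r \<otimes> s) \<otimes> x i \<oplus> \<delta> i (r \<otimes> s) = x i \<otimes> (r \<otimes> s)"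
    using assms by (simp add: x_mult_R)
  also have "\<dots> = \<sigma> i r \<otimes> (\<sigma> i s \<otimes> x i \<oplus> \<delta> i s) \<oplus> \<delta> i r \<otimes> s"
    using assms by (subst x_mult_smult) (simp_all add: x_mult_R)
  also have "\<dots> = \<sigma> i r \<otimes> \<sigma> i s \<otimes> x i \<oplus> (\<sigma> i r \<otimes> \<delta> i s \<oplus> \<delta> i r \<otimes> s)"
    using assms by (simp add: r_distr m_assoc a_assoc)
  finally show "\<sigma> i (r \<otimes> s) \<otimes> x i \<oplus> \<delta> i (r \<otimes> s) =
      \<sigma> i r \<otimes> \<sigma> i s \<otimes> x i \<oplus> (\<sigma> i r \<otimes> \<delta> i s \<oplus> \<delta> i r \<otimes> s)" .
qed (use assms in auto)

lemma sigma_in_R_units_iff: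
  assumes i: "i \<in> {1..n}" and c: "c \<in> R"
  shows "\<sigma> i c \<in> R_units \<longleftrightarrow> c \<in> R_units"
proof
  assume "c \<in> R_units"
  then obtain d where "d \<in> R" "c \<otimes> d = \<one>" "d \<otimes> c = \<one>"
    by (auto simp: R_units_def)
  then show "\<sigma> i c \<in> R_units"
    using i c by (auto simp: R_units_def sigma_one simp flip: sigma_mult intro!: bexI[of _ "\<sigma> i d"])
next
  assume "\<sigma> i c \<in> R_units"
  then obtain w where w: "w \<in> R" "\<sigma> i c \<otimes> w = \<one>" "w \<otimes> \<sigma> i c = \<one>"
    by (auto simp: R_units_def)
  define d where "d = inv_into R (\<sigma> i) w"
  have d: "d \<in> R" "\<sigma> i d = w"
    unfolding d_def using sigma_bij[OF i] w(1)
    by (auto intro: inv_into_into bij_betw_inv_into_right simp: bij_betw_def)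
  have "\<sigma> i (c \<otimes> d) = \<sigma> i \<one>" "\<sigma> i (d \<otimes> c) = \<sigma> i \<one>"
    using i c d w by (simp_all add: sigma_mult sigma_one)
  then have "c \<otimes> d = \<one>" "d \<otimes> c = \<one>"
    using sigma_bij[OF i] c d by (auto simp: bij_betw_def dest: inj_onD)
  then show "c \<in> R_units"
    using c d by (auto simp: R_units_def)
qed

section \<open>Moving generators past monomials\<close>

lemma commutation_R_units:
  assumes "k \<in> {1..n}" "i \<in> {1..n}" "k < i"
  obtains c p where "c \<in> R_units" "p \<in> lin_span A R x n" "x i \<otimes> x k = c \<otimes> x k \<otimes> x i \<oplus> p"
proof -
  obtain c where c: "c \<in> R - {\<zero>}" "x i \<otimes> x k \<ominus> c \<otimes> x k \<otimes> x i \<in> lin_span A R x n"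
    using commutation[OF assms(1,2)] by blast
  have "x i \<otimes> x k = c \<otimes> x k \<otimes> x i \<oplus> (x i \<otimes> x k \<ominus> c \<otimes> x k \<otimes> x i)"
    using assms c by (simp add: add_minus_self)
  then show ?thesis
    using that commutation_coeff_unit[OF assms c] c(2) by blast
qed

lemma lin_span_mult_deg_below:
  assumes p: "p \<in> lin_span A R x n" and b: "b \<in> deg_below m"
    and xb: "\<And>l. l \<in> {1..n} \<Longrightarrow> x l \<otimes> b \<in> deg_below m"
  shows "p \<otimes> b \<in> deg_below m"
proof -
  have bc: "b \<in> carrier A" using b by (rule deg_below_closed)
  have "lin_span A R x n \<subseteq> {p \<in> carrier A. p \<otimes> b \<in> deg_below m}"
  proof (rule lin_span_subset[OF subring_R])
    show "R \<subseteq> {p \<in> carrier A. p \<otimes> b \<in> deg_below m}"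
      using b by (auto intro: deg_below_smult)
    show "r \<otimes> x k \<in> {p \<in> carrier A. p \<otimes> b \<in> deg_below m}" if "k \<in> {1..n}" "r \<in> R" for k r
      using that bc xb by (auto simp: m_assoc intro: deg_below_smult)
    show "a \<oplus> a' \<in> {p \<in> carrier A. p \<otimes> b \<in> deg_below m}"
      if "a \<in> {p \<in> carrier A. p \<otimes> b \<in> deg_below m}" "a' \<in> {p \<in> carrier A. p \<otimes> b \<in> deg_below m}" for a a'
      using that bc by (auto simp: l_distr intro: deg_below_add)
  qed auto
  then show ?thesis using p by blast
qed

lemma x_mult_deg_below_if:
  assumes k: "k \<in> {1..n}" and a: "a \<in> deg_below m"
    and mon: "\<And>\<beta>. \<beta> \<in> exps n \<Longrightarrow> total_deg \<beta> < m \<Longrightarrow> x k \<otimes> xmon \<beta> \<in> deg_below (Suc (Suc (total_deg \<beta>)))"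
  shows "x k \<otimes> a \<in> deg_below (Suc m)"
  using a
proof (induction rule: deg_below_induct)
  case zero
  then show ?case using k by simp
next
  case (add a b)
  then show ?case using k by (simp add: r_distr deg_below_add)
next
  case (monom r \<beta>)
  have "x k \<otimes> xmon \<beta> \<in> deg_below (Suc m)"
    using deg_below_mono[OF mon[OF monom(2,3)]] monom(3) by simp
  then have "\<sigma> k r \<otimes> (x k \<otimes> xmon \<beta>) \<in> deg_below (Suc m)"
    using monom(1) k by (simp add: deg_below_smult)
  moreover have "\<delta> k r \<otimes> xmon \<beta> \<in> deg_below (Suc m)"
    using monom k by (auto intro: smult_mon_in_deg_below)
  ultimately show ?case
    using monom k by (simp add: x_mult_smult deg_below_add)
qed

lemma x_mult_has_leading_term:
  assumes k: "k \<in> {1..n}" and \<alpha>: "\<alpha> \<in> exps n"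
    and a: "has_leading_term a u \<alpha>" and u: "u \<in> R"
    and x_mon: "has_leading_term (x k \<otimes> xmon \<alpha>) v (\<alpha>(k := Suc (\<alpha> k)))" and v: "v \<in> R"
    and lower: "\<And>g. g \<in> deg_below (total_deg \<alpha>) \<Longrightarrow> x k \<otimes> g \<in> deg_below (Suc (total_deg \<alpha>))"
  shows "has_leading_term (x k \<otimes> a) (\<sigma> k u \<otimes> v) (\<alpha>(k := Suc (\<alpha> k)))"
proof -
  obtain g where g: "g \<in> deg_below (total_deg \<alpha>)" "a = u \<otimes> xmon \<alpha> \<oplus> g"
    using a unfolding has_leading_term_def by blast
  have "x k \<otimes> a = \<sigma> k u \<otimes> (x k \<otimes> xmon \<alpha>) \<oplus> (\<delta> k u \<otimes> xmon \<alpha> \<oplus> x k \<otimes> g)"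
    using k u g by (simp add: r_distr x_mult_smult a_assoc deg_below_closed)
  moreover have "\<delta> k u \<otimes> xmon \<alpha> \<oplus> x k \<otimes> g \<in> deg_below (total_deg (\<alpha>(k := Suc (\<alpha> k))))"
    using k u \<alpha> g lower by (auto simp: total_deg_Suc intro!: deg_below_add smult_mon_in_deg_below)
  ultimately show ?thesis
    using k u v by (auto intro!: has_leading_term_add_lower has_leading_term_smult x_mon)
qed

(* Condition (iv) with the invertible coefficient c_{k,i}, k < i, lets x_i pass the first
   variable x_k of the monomial. *)
lemma x_mult_mon_swap:
  assumes k: "k \<in> {1..n}" and i: "i \<in> {1..n}" and ki: "k < i"
    and \<gamma>: "\<gamma> \<in> exps n" and below: "\<forall>l<k. \<gamma> l = 0"
    and u: "u \<in> R_units" "has_leading_term (x i \<otimes> xmon \<gamma>) u (\<gamma>(i := Suc (\<gamma> i)))"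
    and lower: "\<And>l g. l \<in> {1..n} \<Longrightarrow> g \<in> deg_below (Suc (total_deg \<gamma>)) \<Longrightarrow>
        x l \<otimes> g \<in> deg_below (Suc (Suc (total_deg \<gamma>)))"
  shows "\<exists>v\<in>R_units. has_leading_term (x i \<otimes> xmon (\<gamma>(k := Suc (\<gamma> k))))
           v (\<gamma>(k := Suc (\<gamma> k), i := Suc (\<gamma> i)))"
proof -
  let ?\<gamma>' = "\<gamma>(i := Suc (\<gamma> i))"
  let ?\<beta>' = "\<gamma>(k := Suc (\<gamma> k), i := Suc (\<gamma> i))"
  obtain c p where c: "c \<in> R_units" and p: "p \<in> lin_span A R x n"
    and swap: "x i \<otimes> x k = c \<otimes> x k \<otimes> x i \<oplus> p"
    using commutation_R_units[OF k i ki] by blast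
  have uR: "u \<in> R" and cR: "c \<in> R" using u c by (auto simp: R_units_in_R)
  have \<beta>': "?\<beta>' = ?\<gamma>'(k := Suc (?\<gamma>' k))" and deg: "total_deg ?\<gamma>' = Suc (total_deg \<gamma>)"
    using ki i by (auto simp: fun_upd_twist total_deg_Suc)
  have "x k \<otimes> xmon ?\<gamma>' = xmon ?\<beta>'"
    unfolding \<beta>' using below ki by (intro x_mult_mon[OF k]) auto
  then have "has_leading_term (x k \<otimes> xmon ?\<gamma>') \<one> ?\<beta>'"
    using has_leading_term_mon[OF one_in_R, of ?\<beta>'] by simp
  then have "has_leading_term (x k \<otimes> (x i \<otimes> xmon \<gamma>)) (\<sigma> k u \<otimes> \<one>) ?\<beta>'"
    unfolding \<beta>' using k \<gamma> i u(2) uR lower deg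
    by (intro x_mult_has_leading_term) (auto simp: deg)
  then have lead: "has_leading_term (c \<otimes> (x k \<otimes> (x i \<otimes> xmon \<gamma>))) (c \<otimes> \<sigma> k u) ?\<beta>'"
    using has_leading_term_smult cR uR k by fastforce
  have "xmon \<gamma> \<in> deg_below (Suc (Suc (total_deg \<gamma>)))"
    using smult_mon_in_deg_below[OF one_in_R \<gamma>, of "Suc (Suc (total_deg \<gamma>))"] by simp
  moreover have "x l \<otimes> xmon \<gamma> \<in> deg_below (Suc (Suc (total_deg \<gamma>)))" if "l \<in> {1..n}" for l
    using \<gamma> that smult_mon_in_deg_below[OF one_in_R \<gamma>, of "Suc (total_deg \<gamma>)"] by (auto intro: lower)
  moreover have "total_deg ?\<beta>' = Suc (Suc (total_deg \<gamma>))"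
    unfolding \<beta>' by (simp only: total_deg_Suc[OF k] deg)
  ultimately have lower_p: "p \<otimes> xmon \<gamma> \<in> deg_below (total_deg ?\<beta>')"
    using lin_span_mult_deg_below[OF p] by simp
  have "x i \<otimes> xmon (\<gamma>(k := Suc (\<gamma> k))) = (x i \<otimes> x k) \<otimes> xmon \<gamma>"
    using x_mult_mon[OF k below] i k by (simp add: m_assoc)
  also have "\<dots> = c \<otimes> (x k \<otimes> (x i \<otimes> xmon \<gamma>)) \<oplus> p \<otimes> xmon \<gamma>"
    using i k cR p lin_span_closed[OF subring_R x_closed] by (auto simp: swap l_distr m_assoc)
  finally have "has_leading_term (x i \<otimes> xmon (\<gamma>(k := Suc (\<gamma> k)))) (c \<otimes> \<sigma> k u) ?\<beta>'"
    using has_leading_term_add_lower[OF lead lower_p] k uR cR by simp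
  moreover have "c \<otimes> \<sigma> k u \<in> R_units"
    using c u(1) k uR by (simp add: R_units_mult sigma_in_R_units_iff)
  ultimately show ?thesis by blast
qed

lemma x_mult_mon_leading:
  assumes "\<beta> \<in> exps n" "i \<in> {1..n}"
  shows "\<exists>u\<in>R_units. has_leading_term (x i \<otimes> xmon \<beta>) u (\<beta>(i := Suc (\<beta> i)))"
  using assms
proof (induction "total_deg \<beta>" arbitrary: \<beta> i rule: less_induct)
  case less
  have lower: "x l \<otimes> g \<in> deg_below (Suc m)"
    if l: "l \<in> {1..n}" and g: "g \<in> deg_below m" and m: "m \<le> total_deg \<beta>" for l g m
  proof (rule x_mult_deg_below_if[OF l g])
    fix \<gamma> assume \<gamma>: "\<gamma> \<in> exps n" "total_deg \<gamma> < m"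
    then obtain u where "u \<in> R_units" "has_leading_term (x l \<otimes> xmon \<gamma>) u (\<gamma>(l := Suc (\<gamma> l)))"
      using less.hyps[of \<gamma> l] l m by auto
    then show "x l \<otimes> xmon \<gamma> \<in> deg_below (Suc (Suc (total_deg \<gamma>)))"
      using has_leading_term_in_deg_below \<gamma> l by (force simp: total_deg_Suc R_units_in_R)
  qed
  show ?case
  proof (cases "\<forall>l<i. \<beta> l = 0")
    case True
    then show ?thesis
      using x_mult_mon[OF less.prems(2) True] has_leading_term_mon[OF one_in_R] by force
  next
    case False
    then have "\<beta> \<noteq> (\<lambda>_. 0)" by auto
    then obtain k \<gamma> where k: "k \<in> {1..n}" and \<gamma>: "\<gamma> \<in> exps n"
      and below: "\<forall>l<k. \<beta> l = 0" and \<beta>: "\<beta> = \<gamma>(k := Suc (\<gamma> k))"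
      using exps_split_least[OF less.prems(1)] by blast
    have ki: "k < i" using False below by (meson not_less order_less_le_trans)
    have deg: "total_deg \<beta> = Suc (total_deg \<gamma>)"
      unfolding \<beta> using k by (rule total_deg_Suc)
    obtain u where "u \<in> R_units" "has_leading_term (x i \<otimes> xmon \<gamma>) u (\<gamma>(i := Suc (\<gamma> i)))"
      using less.hyps[of \<gamma> i] \<gamma> less.prems(2) deg by auto
    moreover have "\<forall>l<k. \<gamma> l = 0" using below \<beta> by (metis fun_upd_apply less_irrefl)
    ultimately show ?thesis
      using x_mult_mon_swap[OF k less.prems(2) ki \<gamma>] lower deg ki
      by (simp add: \<beta> fun_upd_twist)
  qed
qed

lemma x_mult_mon_deg_below:
  assumes "\<beta> \<in> exps n" "i \<in> {1..n}"
  shows "x i \<otimes> xmon \<beta> \<in> deg_below (Suc (Suc (total_deg \<beta>)))"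
proof -
  obtain u where "u \<in> R_units" "has_leading_term (x i \<otimes> xmon \<beta>) u (\<beta>(i := Suc (\<beta> i)))"
    using x_mult_mon_leading[OF assms] by blast
  then show ?thesis
    using has_leading_term_in_deg_below assms by (force simp: total_deg_Suc R_units_in_R)
qed

lemma x_mult_deg_below: "k \<in> {1..n} \<Longrightarrow> a \<in> deg_below m \<Longrightarrow> x k \<otimes> a \<in> deg_below (Suc m)"
  by (rule x_mult_deg_below_if) (auto intro: x_mult_mon_deg_below)

lemma mon_mult_R_leading:
  assumes "\<beta> \<in> exps n"
  shows "\<exists>\<tau>. bij_betw \<tau> R R \<and> (\<forall>r\<in>R. has_leading_term (xmon \<beta> \<otimes> r) (\<tau> r) \<beta>)"
  using assms
proof (induction "total_deg \<beta>" arbitrary: \<beta>)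
  case 0
  then have "\<beta> = (\<lambda>_. 0)" by (simp add: total_deg_eq_0_iff)
  then have "has_leading_term (xmon \<beta> \<otimes> r) r \<beta>" if "r \<in> R" for r
    using has_leading_term_mon[OF that, of \<beta>] that by (simp add: mon_zero)
  then show ?case by (intro exI[of _ "\<lambda>r. r"]) (auto simp: bij_betw_def)
next
  case (Suc m)
  then have "\<beta> \<noteq> (\<lambda>_. 0)" by auto
  then obtain k \<gamma> where k: "k \<in> {1..n}" and \<gamma>: "\<gamma> \<in> exps n"
    and below: "\<forall>l<k. \<beta> l = 0" and \<beta>: "\<beta> = \<gamma>(k := Suc (\<gamma> k))"
    using exps_split_least[OF Suc.prems] by blast
  have below_\<gamma>: "\<forall>l<k. \<gamma> l = 0" using below \<beta> by (metis fun_upd_apply less_irrefl)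
  have x_mon: "x k \<otimes> xmon \<gamma> = xmon \<beta>"
    unfolding \<beta> by (rule x_mult_mon[OF k below_\<gamma>])
  have "m = total_deg \<gamma>"
    using Suc.hyps(2) unfolding \<beta> by (simp add: total_deg_Suc[OF k])
  then obtain \<tau> where \<tau>: "bij_betw \<tau> R R" "\<forall>r\<in>R. has_leading_term (xmon \<gamma> \<otimes> r) (\<tau> r) \<gamma>"
    using Suc.hyps(1) \<gamma> by blast
  have "has_leading_term (xmon \<beta> \<otimes> r) (\<sigma> k (\<tau> r)) \<beta>" if r: "r \<in> R" for r
  proof -
    have \<tau>r: "\<tau> r \<in> R" using \<tau>(1) r by (auto dest: bij_betwE)
    have "has_leading_term (x k \<otimes> (xmon \<gamma> \<otimes> r)) (\<sigma> k (\<tau> r) \<otimes> \<one>) \<beta>"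
      unfolding \<beta> using k \<gamma> \<tau>(2) r \<tau>r x_mon[unfolded \<beta>] has_leading_term_mon[OF one_in_R]
      by (intro x_mult_has_leading_term) (auto intro: x_mult_deg_below)
    moreover have "xmon \<beta> \<otimes> r = x k \<otimes> (xmon \<gamma> \<otimes> r)"
      using k r by (simp add: m_assoc flip: x_mon)
    ultimately show ?thesis
      using k r \<tau>r by simp
  qed
  moreover have "bij_betw (\<lambda>r. \<sigma> k (\<tau> r)) R R"
    using bij_betw_trans[OF \<tau>(1) sigma_bij[OF k]] by (simp add: comp_def)
  ultimately show ?case by blast
qed

lemma deg_below_mult_R: "a \<in> deg_below m \<Longrightarrow> r \<in> R \<Longrightarrow> a \<otimes> r \<in> deg_below m"
proof (induction rule: deg_below_induct)
  case (add a b)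
  then show ?case by (simp add: l_distr deg_below_add)
next
  case (monom s \<beta>)
  obtain \<tau> where \<tau>: "bij_betw \<tau> R R" "has_leading_term (xmon \<beta> \<otimes> r) (\<tau> r) \<beta>"
    using mon_mult_R_leading[OF monom(2)] monom(4) by blast
  have "\<tau> r \<in> R" using \<tau>(1) monom(4) by (auto dest: bij_betwE)
  then have "xmon \<beta> \<otimes> r \<in> deg_below (Suc (total_deg \<beta>))"
    using has_leading_term_in_deg_below[OF \<tau>(2) monom(2)] by blast
  then have "xmon \<beta> \<otimes> r \<in> deg_below m"
    using monom(3) by (auto elim: deg_below_mono)
  then show ?case
    using monom by (simp add: m_assoc deg_below_smult)
qed simp

definition word :: "nat list \<Rightarrow> 'a" where
  "word ws = foldr (\<lambda>i acc. x i \<otimes> acc) ws \<one>"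

lemma word_Nil [simp]: "word [] = \<one>"
  and word_Cons [simp]: "word (i # ws) = x i \<otimes> word ws"
  by (simp_all add: word_def)

lemma word_closed [simp]: "set ws \<subseteq> {1..n} \<Longrightarrow> word ws \<in> carrier A"
  by (induction ws) auto

lemma word_append: "set us \<subseteq> {1..n} \<Longrightarrow> set vs \<subseteq> {1..n} \<Longrightarrow> word (us @ vs) = word us \<otimes> word vs"
  by (induction us) (auto simp: m_assoc)

lemma word_replicate: "i \<in> {1..n} \<Longrightarrow> word (replicate k i) = x i [^] k"
  by (induction k) (simp_all flip: nat_pow_Suc2 del: nat_pow_Suc)

lemma count_list_Cons_fun: "count_list (i # ws) = (count_list ws)(i := Suc (count_list ws i))"
  by (auto simp: fun_eq_iff)

lemma count_list_in_exps: "set ws \<subseteq> {1..n} \<Longrightarrow> count_list ws \<in> exps n"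
  unfolding exps_def by (auto intro: count_notin)

lemma word_leading: "set ws \<subseteq> {1..n} \<Longrightarrow> \<exists>u\<in>R_units. has_leading_term (word ws) u (count_list ws)"
proof (induction ws)
  case Nil
  then show ?case
    using has_leading_term_mon[OF one_in_R, of "\<lambda>_. 0"] by (auto simp: mon_zero fun_eq_iff)
next
  case (Cons i ws)
  then have i: "i \<in> {1..n}" and ws: "set ws \<subseteq> {1..n}" by auto
  obtain u where u: "u \<in> R_units" "has_leading_term (word ws) u (count_list ws)"
    using Cons.IH ws by blast
  obtain v where v: "v \<in> R_units"
    "has_leading_term (x i \<otimes> xmon (count_list ws)) v ((count_list ws)(i := Suc (count_list ws i)))"
    using x_mult_mon_leading[OF count_list_in_exps[OF ws] i] by blast
  have "has_leading_term (x i \<otimes> word ws) (\<sigma> i u \<otimes> v) (count_list (i # ws))"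
    unfolding count_list_Cons_fun using i ws u v
    by (intro x_mult_has_leading_term) (auto simp: count_list_in_exps R_units_in_R intro: x_mult_deg_below)
  moreover have "\<sigma> i u \<otimes> v \<in> R_units"
    using i u v by (simp add: R_units_mult sigma_in_R_units_iff R_units_in_R)
  ultimately show ?case
    unfolding word_Cons by blast
qed

section \<open>The reversed monomials form a right basis\<close>

lemma count_list_replicate: "count_list (replicate k i) l = (if i = l then k else 0)"
  by (induction k) auto

lemma op_mon_eq_word: "op_mon \<alpha> = word (concat (map (\<lambda>i. replicate (\<alpha> i) i) (rev [1..<Suc n])))"
proof -
  have reversed: "foldr (\<lambda>i acc. acc \<otimes> x i [^] \<alpha> i) L \<one> = word (concat (map (\<lambda>i. replicate (\<alpha> i) i) (rev L)))"
    if "set L \<subseteq> {1..n}" for L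
    using that
  proof (induction L)
    case (Cons i L)
    then show ?case
      by (simp add: word_append word_replicate subset_iff)
  qed simp
  have "op_mon \<alpha> = foldr (\<lambda>i acc. acc \<otimes> x i [^] \<alpha> i) [1..<Suc n] \<one>"
    unfolding mon_def by (rule foldr_cong) (auto simp: nat_pow_opp_ring)
  also have "\<dots> = word (concat (map (\<lambda>i. replicate (\<alpha> i) i) (rev [1..<Suc n])))"
    by (rule reversed) auto
  finally show ?thesis .
qed

lemma op_mon_closed [simp]: "op_mon \<alpha> \<in> carrier A"
  unfolding op_mon_eq_word by (rule word_closed) auto

lemma op_mon_leading: "\<alpha> \<in> exps n \<Longrightarrow> \<exists>u\<in>R_units. has_leading_term (op_mon \<alpha>) u \<alpha>"
proof -
  assume \<alpha>: "\<alpha> \<in> exps n"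
  let ?ws = "concat (map (\<lambda>i. replicate (\<alpha> i) i) (rev [1..<Suc n]))"
  have "count_list ?ws l = (if l \<in> {1..n} then \<alpha> l else 0)" for l
  proof -
    have "count_list (concat (map (\<lambda>i. replicate (\<alpha> i) i) L)) l = (if l \<in> set L then \<alpha> l else 0)"
      if "distinct L" for L
      using that by (induction L) (auto simp: count_list_replicate)
    then show ?thesis by simp
  qed
  then have count: "count_list ?ws = \<alpha>"
    using \<alpha> unfolding exps_def by auto
  have "set ?ws \<subseteq> {1..n}" by auto
  then have "\<exists>u\<in>R_units. has_leading_term (word ?ws) u (count_list ?ws)"
    by (rule word_leading)
  then show ?thesis
    unfolding op_mon_eq_word count .
qed

lemma op_mon_mult_R_leading:
  assumes \<alpha>: "\<alpha> \<in> exps n"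
  obtains \<phi> where "bij_betw \<phi> R R" "\<And>s. s \<in> R \<Longrightarrow> has_leading_term (op_mon \<alpha> \<otimes> s) (\<phi> s) \<alpha>"
proof -
  obtain u where u: "u \<in> R_units" "has_leading_term (op_mon \<alpha>) u \<alpha>"
    using op_mon_leading[OF \<alpha>] by blast
  then obtain g where g: "g \<in> deg_below (total_deg \<alpha>)" "op_mon \<alpha> = u \<otimes> xmon \<alpha> \<oplus> g"
    unfolding has_leading_term_def by blast
  obtain \<tau> where \<tau>: "bij_betw \<tau> R R" "\<forall>r\<in>R. has_leading_term (xmon \<alpha> \<otimes> r) (\<tau> r) \<alpha>"
    using mon_mult_R_leading[OF \<alpha>] by blast
  have uR: "u \<in> R" using u(1) by (rule R_units_in_R)
  show ?thesis
  proof
    show "bij_betw (\<lambda>s. u \<otimes> \<tau> s) R R"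
      using bij_betw_trans[OF \<tau>(1) bij_betw_R_units_mult[OF u(1)]] by (simp add: comp_def)
    fix s assume s: "s \<in> R"
    have "op_mon \<alpha> \<otimes> s = u \<otimes> (xmon \<alpha> \<otimes> s) \<oplus> g \<otimes> s"
      using g uR s by (simp add: l_distr m_assoc deg_below_closed)
    moreover have "has_leading_term (u \<otimes> (xmon \<alpha> \<otimes> s)) (u \<otimes> \<tau> s) \<alpha>"
      using \<tau> s uR by (auto intro: has_leading_term_smult dest: bij_betwE)
    ultimately show "has_leading_term (op_mon \<alpha> \<otimes> s) (u \<otimes> \<tau> s) \<alpha>"
      using g s uR \<tau>(1) by (auto intro!: has_leading_term_add_lower deg_below_mult_R dest: bij_betwE)
  qed
qed

lemma op_mon_mult_R_surj:
  assumes "\<alpha> \<in> exps n" "r \<in> R"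
  shows "\<exists>t. t \<in> R \<and> has_leading_term (op_mon \<alpha> \<otimes> t) r \<alpha>"
proof -
  obtain \<phi> where \<phi>: "bij_betw \<phi> R R" "\<And>s. s \<in> R \<Longrightarrow> has_leading_term (op_mon \<alpha> \<otimes> s) (\<phi> s) \<alpha>"
    using op_mon_mult_R_leading[OF assms(1)] by blast
  then obtain t where "t \<in> R" "\<phi> t = r"
    using assms(2) by (metis bij_betw_iff_bijections)
  then show ?thesis using \<phi>(2) by blast
qed

lemma op_mon_mult_R_nonzero:
  assumes \<alpha>: "\<alpha> \<in> exps n" and s: "s \<in> R" "s \<noteq> \<zero>"
  obtains v where "v \<in> R" "v \<noteq> \<zero>" "has_leading_term (op_mon \<alpha> \<otimes> s) v \<alpha>"
proof -
  obtain \<phi> where \<phi>: "bij_betw \<phi> R R" "\<And>s. s \<in> R \<Longrightarrow> has_leading_term (op_mon \<alpha> \<otimes> s) (\<phi> s) \<alpha>"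
    using op_mon_mult_R_leading[OF \<alpha>] by blast
  have "has_leading_term \<zero> (\<phi> \<zero>) \<alpha>"
    using \<phi>(2)[OF zero_in_R] by simp
  moreover have "has_leading_term \<zero> \<zero> \<alpha>"
    using has_leading_term_mon[OF zero_in_R, of \<alpha>] by simp
  moreover have "\<phi> \<zero> \<in> R"
    using \<phi>(1) by (auto dest: bij_betwE)
  ultimately have "\<phi> \<zero> = \<zero>"
    using \<alpha> by (auto intro: leading_coeff_unique)
  then have "\<phi> s \<noteq> \<zero>"
    using \<phi>(1) s by (metis bij_betw_iff_bijections zero_in_R)
  then show ?thesis
    using that \<phi> s by (auto dest: bij_betwE)
qed

lemma finsum_leading_terms:
  assumes I: "finite I"
    and lead: "\<And>\<alpha>. \<alpha> \<in> I \<Longrightarrow> has_leading_term (f \<alpha>) (v \<alpha>) \<alpha>" and v: "\<And>\<alpha>. \<alpha> \<in> I \<Longrightarrow> v \<alpha> \<in> R"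
    and deg: "\<And>\<alpha>. \<alpha> \<in> I \<Longrightarrow> total_deg \<alpha> \<le> d"
  obtains g where "g \<in> deg_below d" "(\<Oplus>\<alpha>\<in>I. f \<alpha>) = lin_comb A xmon v I \<oplus> g"
proof -
  have "\<forall>\<alpha>\<in>I. \<exists>g. g \<in> deg_below (total_deg \<alpha>) \<and> f \<alpha> = v \<alpha> \<otimes> xmon \<alpha> \<oplus> g"
    using lead unfolding has_leading_term_def by blast
  from bchoice[OF this] obtain g
    where "\<forall>\<alpha>\<in>I. g \<alpha> \<in> deg_below (total_deg \<alpha>) \<and> f \<alpha> = v \<alpha> \<otimes> xmon \<alpha> \<oplus> g \<alpha>" ..
  then have g: "\<And>\<alpha>. \<alpha> \<in> I \<Longrightarrow> g \<alpha> \<in> deg_below (total_deg \<alpha>)"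
    "\<And>\<alpha>. \<alpha> \<in> I \<Longrightarrow> f \<alpha> = v \<alpha> \<otimes> xmon \<alpha> \<oplus> g \<alpha>"
    by auto
  have gc: "\<And>\<alpha>. \<alpha> \<in> I \<Longrightarrow> g \<alpha> \<in> carrier A" using g(1) by (rule deg_below_closed)
  have "(\<Oplus>\<alpha>\<in>I. f \<alpha>) = (\<Oplus>\<alpha>\<in>I. v \<alpha> \<otimes> xmon \<alpha> \<oplus> g \<alpha>)"
    by (rule finsum_cong') (use g v gc in auto)
  also have "\<dots> = lin_comb A xmon v I \<oplus> (\<Oplus>\<alpha>\<in>I. g \<alpha>)"
    unfolding lin_comb_def by (rule finsum_addf) (use v gc in auto)
  finally show ?thesis
    using that finsum_in_deg_below[OF I] g(1) deg deg_below_mono by metis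
qed

lemma mon_coeff_finsum_leading_terms:
  assumes I: "finite I" "I \<subseteq> exps n"
    and lead: "\<And>\<alpha>. \<alpha> \<in> I \<Longrightarrow> has_leading_term (f \<alpha>) (v \<alpha>) \<alpha>" and v: "\<And>\<alpha>. \<alpha> \<in> I \<Longrightarrow> v \<alpha> \<in> R"
    and \<alpha>\<^sub>0: "\<alpha>\<^sub>0 \<in> I" and top: "\<And>\<alpha>. \<alpha> \<in> I \<Longrightarrow> total_deg \<alpha> \<le> total_deg \<alpha>\<^sub>0"
  shows "mon_coeff (\<Oplus>\<alpha>\<in>I. f \<alpha>) \<alpha>\<^sub>0 = v \<alpha>\<^sub>0"
proof -
  obtain g where g: "g \<in> deg_below (total_deg \<alpha>\<^sub>0)" "(\<Oplus>\<alpha>\<in>I. f \<alpha>) = lin_comb A xmon v I \<oplus> g"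
    using finsum_leading_terms[OF I(1) lead v top] by blast
  have "mon_coeff (lin_comb A xmon v I) \<alpha>\<^sub>0 = v \<alpha>\<^sub>0"
    using I v \<alpha>\<^sub>0 by (simp add: mon_coeff_lin_comb)
  moreover have "mon_coeff g \<alpha>\<^sub>0 = \<zero>"
    using g(1) by (simp add: deg_below_def)
  ultimately show ?thesis
    using g v \<alpha>\<^sub>0 by (simp add: mon_coeff_add deg_below_closed lin_comb_closed)
qed

lemma deg_below_cancel_top:
  assumes a: "a \<in> deg_below (Suc m)"
    and lead: "\<And>\<alpha>. mon_coeff a \<alpha> \<noteq> \<zero> \<Longrightarrow> total_deg \<alpha> = m \<Longrightarrow> has_leading_term (f \<alpha>) (mon_coeff a \<alpha>) \<alpha>"
  shows "a \<ominus> (\<Oplus>\<alpha>\<in>{\<alpha>. mon_coeff a \<alpha> \<noteq> \<zero> \<and> total_deg \<alpha> = m}. f \<alpha>) \<in> deg_below m"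
proof -
  let ?T = "{\<alpha>. mon_coeff a \<alpha> \<noteq> \<zero> \<and> total_deg \<alpha> = m}"
  have ac: "a \<in> carrier A" using a by (rule deg_below_closed)
  have T: "finite ?T" "?T \<subseteq> exps n"
    using finite_mon_coeff_support[OF ac] mon_coeff_support_exps[OF ac] by (auto elim: finite_subset[rotated])
  obtain g where g: "g \<in> deg_below m" "(\<Oplus>\<alpha>\<in>?T. f \<alpha>) = lin_comb A xmon (mon_coeff a) ?T \<oplus> g"
    using finsum_leading_terms[OF T(1), of f "mon_coeff a" m] lead ac by auto
  have lc: "lin_comb A xmon (mon_coeff a) ?T \<in> carrier A"
    using ac by (auto intro: lin_comb_closed)
  have "a \<ominus> lin_comb A xmon (mon_coeff a) ?T \<in> deg_below m"
    using a T ac lc by (auto simp: deg_below_def mon_coeff_add mon_coeff_uminus mon_coeff_lin_comb a_minus_def r_neg)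
  then have "(a \<ominus> lin_comb A xmon (mon_coeff a) ?T) \<ominus> g \<in> deg_below m"
    using g(1) by (rule deg_below_minus)
  then show ?thesis
    using g ac lc by (simp add: a_minus_def minus_add a_assoc deg_below_closed)
qed

lemma carrier_in_deg_below:
  assumes "a \<in> carrier A"
  obtains m where "a \<in> deg_below m"
proof
  let ?m = "Suc (Max (total_deg ` {\<alpha>. mon_coeff a \<alpha> \<noteq> \<zero>}))"
  show "a \<in> deg_below ?m"
    unfolding deg_below_def
  proof (intro CollectI conjI allI impI assms)
    fix \<alpha> assume deg: "?m \<le> total_deg \<alpha>"
    show "mon_coeff a \<alpha> = \<zero>"
    proof (rule ccontr)
      assume "mon_coeff a \<alpha> \<noteq> \<zero>"
      then have "total_deg \<alpha> \<le> Max (total_deg ` {\<alpha>. mon_coeff a \<alpha> \<noteq> \<zero>})"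
        using finite_mon_coeff_support[OF assms] by (intro Max_ge finite_imageI) auto
      with deg show False by simp
    qed
  qed
qed

lemma deg_below_Suc_minus_op_comb:
  assumes a: "a \<in> deg_below (Suc m)"
  obtains c where "c \<in> lin_combs (opp_ring A) R op_mon (exps n)" "c \<in> carrier A" "a \<ominus> c \<in> deg_below m"
proof -
  let ?T = "{\<alpha>. mon_coeff a \<alpha> \<noteq> \<zero> \<and> total_deg \<alpha> = m}"
  have ac: "a \<in> carrier A" using a by (rule deg_below_closed)
  have T: "finite ?T" "?T \<subseteq> exps n"
    using finite_mon_coeff_support[OF ac] mon_coeff_support_exps[OF ac] by (auto elim: finite_subset[rotated])
  have "\<forall>\<alpha>\<in>?T. \<exists>t. t \<in> R \<and> has_leading_term (op_mon \<alpha> \<otimes> t) (mon_coeff a \<alpha>) \<alpha>"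
    using T(2) ac by (auto intro!: op_mon_mult_R_surj)
  from bchoice[OF this] obtain t
    where "\<forall>\<alpha>\<in>?T. t \<alpha> \<in> R \<and> has_leading_term (op_mon \<alpha> \<otimes> t \<alpha>) (mon_coeff a \<alpha>) \<alpha>" ..
  then have t: "\<And>\<alpha>. \<alpha> \<in> ?T \<Longrightarrow> t \<alpha> \<in> R"
    "\<And>\<alpha>. \<alpha> \<in> ?T \<Longrightarrow> has_leading_term (op_mon \<alpha> \<otimes> t \<alpha>) (mon_coeff a \<alpha>) \<alpha>"
    by auto
  have top: "lin_comb (opp_ring A) op_mon t ?T = (\<Oplus>\<alpha>\<in>?T. op_mon \<alpha> \<otimes> t \<alpha>)"
    by (simp add: lin_comb_def)
  show ?thesis
  proof
    show "lin_comb (opp_ring A) op_mon t ?T \<in> lin_combs (opp_ring A) R op_mon (exps n)"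
      using T t(1) by (intro opp.lin_comb_in_lin_combs) auto
    show "lin_comb (opp_ring A) op_mon t ?T \<in> carrier A"
      unfolding top using t(1) by (auto intro!: finsum_closed)
    show "a \<ominus> lin_comb (opp_ring A) op_mon t ?T \<in> deg_below m"
      unfolding top by (rule deg_below_cancel_top[OF a]) (simp add: t(2))
  qed
qed

lemma carrier_subset_op_combs: "carrier A \<subseteq> lin_combs (opp_ring A) R op_mon (exps n)"
proof -
  have "deg_below m \<subseteq> lin_combs (opp_ring A) R op_mon (exps n)" for m
  proof (induction m)
    case 0
    have "lin_comb (opp_ring A) op_mon (\<lambda>_. \<zero>) {} \<in> lin_combs (opp_ring A) R op_mon (exps n)"
      by (rule opp.lin_comb_in_lin_combs) auto
    then show ?case
      using deg_below_0 by (auto simp: lin_comb_def)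
  next
    case (Suc m)
    show ?case
    proof
      fix a assume a: "a \<in> deg_below (Suc m)"
      then obtain c where c: "c \<in> lin_combs (opp_ring A) R op_mon (exps n)" "c \<in> carrier A"
        and "a \<ominus> c \<in> deg_below m"
        by (rule deg_below_Suc_minus_op_comb)
      then have "(a \<ominus> c) \<oplus> c \<in> lin_combs (opp_ring A) R op_mon (exps n)"
        using Suc.IH opp.lin_combs_add[OF subring_R_opp, of op_mon "exps n"] by auto
      moreover have "(a \<ominus> c) \<oplus> c = a"
        using a c(2) by (simp add: a_minus_def a_assoc l_neg deg_below_closed)
      ultimately show "a \<in> lin_combs (opp_ring A) R op_mon (exps n)" by simp
    qed
  qed
  then show ?thesis
    using carrier_in_deg_below by blast
qed

lemma op_mon_independent:
  assumes I: "finite I" "I \<subseteq> exps n" and s: "\<forall>\<alpha>\<in>I. s \<alpha> \<in> R"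
    and zero: "lin_comb (opp_ring A) op_mon s I = \<zero>"
  shows "\<forall>\<alpha>\<in>I. s \<alpha> = \<zero>"
proof (rule ccontr)
  let ?I = "{\<alpha> \<in> I. s \<alpha> \<noteq> \<zero>}"
  assume "\<not> (\<forall>\<alpha>\<in>I. s \<alpha> = \<zero>)"
  then have I': "finite ?I" "?I \<noteq> {}" using I(1) by auto
  have "Max (total_deg ` ?I) \<in> total_deg ` ?I"
    using I' by (intro Max_in) auto
  then obtain \<alpha>\<^sub>0 where \<alpha>\<^sub>0: "\<alpha>\<^sub>0 \<in> ?I" "total_deg \<alpha>\<^sub>0 = Max (total_deg ` ?I)"
    by auto
  have top: "total_deg \<alpha> \<le> total_deg \<alpha>\<^sub>0" if "\<alpha> \<in> ?I" for \<alpha>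
    unfolding \<alpha>\<^sub>0(2) using I'(1) that by (intro Max_ge) auto
  have "\<forall>\<alpha>\<in>?I. \<exists>v. v \<in> R \<and> v \<noteq> \<zero> \<and> has_leading_term (op_mon \<alpha> \<otimes> s \<alpha>) v \<alpha>"
    using I(2) s by (auto elim!: op_mon_mult_R_nonzero)
  from bchoice[OF this] obtain v
    where v: "\<forall>\<alpha>\<in>?I. v \<alpha> \<in> R \<and> v \<alpha> \<noteq> \<zero> \<and> has_leading_term (op_mon \<alpha> \<otimes> s \<alpha>) (v \<alpha>) \<alpha>" ..
  have "(\<Oplus>\<alpha>\<in>?I. op_mon \<alpha> \<otimes> s \<alpha>) = (\<Oplus>\<alpha>\<in>I. op_mon \<alpha> \<otimes> s \<alpha>)"
    by (rule add.finprod_mono_neutral_cong_left) (use I s in auto)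
  also have "\<dots> = \<zero>"
    using zero by (simp add: lin_comb_def)
  finally have "mon_coeff (\<Oplus>\<alpha>\<in>?I. op_mon \<alpha> \<otimes> s \<alpha>) \<alpha>\<^sub>0 = \<zero>" by simp
  moreover have "mon_coeff (\<Oplus>\<alpha>\<in>?I. op_mon \<alpha> \<otimes> s \<alpha>) \<alpha>\<^sub>0 = v \<alpha>\<^sub>0"
    using I' I(2) v \<alpha>\<^sub>0(1) top by (intro mon_coeff_finsum_leading_terms) auto
  ultimately show False
    using v \<alpha>\<^sub>0(1) by auto
qed

lemma free_basis_opp:
  assumes a: "a \<in> carrier A"
  shows "\<exists>!c. (\<forall>\<alpha>. c \<alpha> \<in> R) \<and> (\<forall>\<alpha>. \<alpha> \<notin> exps n \<longrightarrow> c \<alpha> = \<zero>) \<and>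
     finite {\<alpha>. c \<alpha> \<noteq> \<zero>} \<and> a = lin_comb (opp_ring A) op_mon c {\<alpha>. c \<alpha> \<noteq> \<zero>}"
proof -
  have "op_mon \<in> exps n \<rightarrow> carrier (opp_ring A)" by simp
  moreover have "carrier (opp_ring A) \<subseteq> lin_combs (opp_ring A) R op_mon (exps n)"
    using carrier_subset_op_combs by simp
  moreover have "\<And>I c. finite I \<Longrightarrow> I \<subseteq> exps n \<Longrightarrow> \<forall>\<alpha>\<in>I. c \<alpha> \<in> R \<Longrightarrow>
      lin_comb (opp_ring A) op_mon c I = \<zero>\<^bsub>opp_ring A\<^esub> \<Longrightarrow> \<forall>\<alpha>\<in>I. c \<alpha> = \<zero>\<^bsub>opp_ring A\<^esub>"
    using op_mon_independent by simp
  ultimately show ?thesis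
    using opp.ex1_lin_comb_coeffs[OF subring_R_opp, of op_mon "exps n" a] a by simp
qed

section \<open>The opposite extension\<close>

lemma sigma_inv_closed [simp]: "i \<in> {1..n} \<Longrightarrow> r \<in> R \<Longrightarrow> inv_into R (\<sigma> i) r \<in> R"
  using sigma_bij by (metis bij_betw_def inv_into_into)

lemma sigma_sigma_inv [simp]: "i \<in> {1..n} \<Longrightarrow> r \<in> R \<Longrightarrow> \<sigma> i (inv_into R (\<sigma> i) r) = r"
  using sigma_bij by (rule bij_betw_inv_into_right)

lemma R_mult_x:
  assumes "i \<in> {1..n}" "r \<in> R"
  shows "r \<otimes> x i = x i \<otimes> inv_into R (\<sigma> i) r \<oplus> \<ominus> \<delta> i (inv_into R (\<sigma> i) r)"
  using x_mult_R[OF assms(1) sigma_inv_closed[OF assms]] assms by (simp add: a_assoc r_neg)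

lemma assoc_maps_opp:
  "assoc_maps (opp_ring A) R x n (\<lambda>i r. inv_into R (\<sigma> i) r) (\<lambda>i r. \<ominus> \<delta> i (inv_into R (\<sigma> i) r))"
  unfolding assoc_maps_def using R_mult_x by simp

lemma assoc_maps_opp_bij:
  assumes maps': "assoc_maps (opp_ring A) R x n \<sigma>' \<delta>'" and i: "i \<in> {1..n}"
  shows "bij_betw (\<sigma>' i) R R"
proof -
  have "\<sigma>' i r = inv_into R (\<sigma> i) r" if r: "r \<in> R" for r
  proof -
    define t where "t = \<sigma>' i r"
    have t: "t \<in> R" "\<delta>' i r \<in> R" "r \<otimes> x i = x i \<otimes> t \<oplus> \<delta>' i r"
      using maps'[unfolded assoc_maps_def, rule_format, OF i r] by (simp_all add: t_def)
    have "r \<otimes> x i = (\<sigma> i t \<otimes> x i \<oplus> \<delta> i t) \<oplus> \<delta>' i r"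
      using t(3) x_mult_R[OF i t(1)] by simp
    then have "r \<otimes> x i \<oplus> \<zero> = \<sigma> i t \<otimes> x i \<oplus> (\<delta> i t \<oplus> \<delta>' i r)"
      using i r t by (simp add: a_assoc)
    then have "r = \<sigma> i t"
      by (rule x_smult_plus_R_unique[OF i r zero_in_R, rotated 2]) (use i t in auto)
    then show ?thesis
      using inv_into_f_f[OF bij_betw_imp_inj_on[OF sigma_bij[OF i]] t(1)] by (simp add: t_def)
  qed
  then have "bij_betw (\<sigma>' i) R R \<longleftrightarrow> bij_betw (inv_into R (\<sigma> i)) R R"
    by (rule bij_betw_cong)
  then show ?thesis
    using bij_betw_inv_into[OF sigma_bij[OF i]] by simp
qed

lemma x_mult_R_in_lin_span: "k \<in> {1..n} \<Longrightarrow> r \<in> R \<Longrightarrow> x k \<otimes> r \<in> lin_span A R x n"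
  by (simp add: x_mult_R lin_span_add[OF subring_R x_closed] smult_gen_in_lin_span[OF subring_R x_closed]
      subring_subset_lin_span[OF subring_R x_closed, THEN subsetD])

lemma lin_span_opp: "lin_span (opp_ring A) R x n = lin_span A R x n"
proof
  show "lin_span (opp_ring A) R x n \<subseteq> lin_span A R x n"
    using subring_subset_lin_span[OF subring_R x_closed] lin_span_closed[OF subring_R x_closed]
      x_mult_R_in_lin_span lin_span_add[OF subring_R x_closed]
    by (intro opp.lin_span_subset[OF subring_R_opp]) auto
  have x_opp: "x \<in> {1..n} \<rightarrow> carrier (opp_ring A)" using x_closed by simp
  have "r \<otimes> x k \<in> lin_span (opp_ring A) R x n" if k: "k \<in> {1..n}" and r: "r \<in> R" for k r
  proof -
    let ?s = "inv_into R (\<sigma> k) r"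
    have "x k \<otimes> ?s \<in> lin_span (opp_ring A) R x n"
      using opp.smult_gen_in_lin_span[OF subring_R_opp x_opp k sigma_inv_closed[OF k r]] by simp
    moreover have "\<ominus> \<delta> k ?s \<in> lin_span (opp_ring A) R x n"
      using opp.subring_subset_lin_span[OF subring_R_opp x_opp] k r by auto
    ultimately have "x k \<otimes> ?s \<oplus> \<ominus> \<delta> k ?s \<in> lin_span (opp_ring A) R x n"
      using opp.lin_span_add[OF subring_R_opp x_opp] by simp
    then show ?thesis
      using R_mult_x[OF k r] by simp
  qed
  then show "lin_span A R x n \<subseteq> lin_span (opp_ring A) R x n"
    using opp.subring_subset_lin_span[OF subring_R_opp x_opp] opp.lin_span_closed[OF subring_R_opp x_opp]
      opp.lin_span_add[OF subring_R_opp x_opp]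
    by (intro lin_span_subset[OF subring_R]) auto
qed

lemma lin_span_deg_below_2: "lin_span A R x n \<subseteq> deg_below 2"
proof (rule lin_span_subset[OF subring_R])
  show "r \<otimes> x k \<in> deg_below 2" if "k \<in> {1..n}" "r \<in> R" for k r
    using that smult_mon_in_deg_below[of r "(\<lambda>_. 0)(k := 1)" 2] total_deg_Suc[of k "\<lambda>_. 0"]
      exps_fun_upd[OF zero_in_exps that(1)]
    by (simp add: x_eq_mon)
qed (auto intro: R_in_deg_below deg_below_add deg_below_closed)

lemma x_mult_x_mult_R:
  assumes i: "i \<in> {1..n}" and j: "j \<in> {1..n}" and c: "c \<in> R"
  obtains q where "q \<in> lin_span A R x n" "x j \<otimes> (x i \<otimes> c) = \<sigma> j (\<sigma> i c) \<otimes> (x j \<otimes> x i) \<oplus> q"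
proof
  show "\<delta> j (\<sigma> i c) \<otimes> x i \<oplus> x j \<otimes> \<delta> i c \<in> lin_span A R x n"
    using i j c by (auto intro!: lin_span_add[OF subring_R x_closed] smult_gen_in_lin_span[OF subring_R x_closed]
        x_mult_R_in_lin_span)
  show "x j \<otimes> (x i \<otimes> c) = \<sigma> j (\<sigma> i c) \<otimes> (x j \<otimes> x i) \<oplus> (\<delta> j (\<sigma> i c) \<otimes> x i \<oplus> x j \<otimes> \<delta> i c)"
    using i j c by (simp add: x_mult_R r_distr x_mult_smult m_assoc a_assoc)
qed

lemma opp_commutation:
  assumes i: "i \<in> {1..n}" and j: "j \<in> {1..n}"
  shows "\<exists>c\<in>R - {\<zero>}. x i \<otimes> x j \<ominus> x j \<otimes> (x i \<otimes> c) \<in> lin_span A R x n"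
proof -
  obtain c where c: "c \<in> R - {\<zero>}" "x i \<otimes> x j \<ominus> c \<otimes> x j \<otimes> x i \<in> lin_span A R x n"
    using commutation[OF j i] by blast
  define c' where "c' = inv_into R (\<sigma> i) (inv_into R (\<sigma> j) c)"
  have c': "c' \<in> R" "\<sigma> j (\<sigma> i c') = c"
    using i j c by (simp_all add: c'_def)
  then have "c' \<noteq> \<zero>"
    using c i j by (auto simp: sigma_zero)
  obtain q where q: "q \<in> lin_span A R x n" "x j \<otimes> (x i \<otimes> c') = c \<otimes> (x j \<otimes> x i) \<oplus> q"
    using x_mult_x_mult_R[OF i j c'(1)] c'(2) by metis
  have "x i \<otimes> x j \<ominus> x j \<otimes> (x i \<otimes> c') = (x i \<otimes> x j \<ominus> c \<otimes> x j \<otimes> x i) \<oplus> \<ominus> q"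
    using i j c q lin_span_closed[OF subring_R x_closed]
    by (auto simp: a_minus_def minus_add m_assoc a_assoc)
  also have "\<dots> \<in> lin_span A R x n"
    using c(2) q(1) by (intro lin_span_add[OF subring_R x_closed] lin_span_uminus[OF subring_R x_closed])
  finally show ?thesis
    using c' \<open>c' \<noteq> \<zero>\<close> by blast
qed

(* Both sides of the hypothesis have leading monomial x_i x_j, and comparing its coefficients
   gives \<sigma>_j(\<sigma>_i(c)) c_{i,j} = 1. *)
lemma opp_commutation_coeff_unit:
  assumes i: "i \<in> {1..n}" and j: "j \<in> {1..n}" and ij: "i < j" and c: "c \<in> R"
    and L: "x i \<otimes> x j \<ominus> x j \<otimes> (x i \<otimes> c) \<in> lin_span A R x n"
  shows "c \<in> R_units"
proof -
  obtain c\<^sub>i\<^sub>j where cij: "c\<^sub>i\<^sub>j \<in> R - {\<zero>}" "x j \<otimes> x i \<ominus> c\<^sub>i\<^sub>j \<otimes> x i \<otimes> x j \<in> lin_span A R x n"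
    using commutation[OF i j] by blast
  define p where "p = x j \<otimes> x i \<ominus> c\<^sub>i\<^sub>j \<otimes> x i \<otimes> x j"
  define s where "s = \<sigma> j (\<sigma> i c)"
  obtain q where q: "q \<in> lin_span A R x n" "x j \<otimes> (x i \<otimes> c) = s \<otimes> (x j \<otimes> x i) \<oplus> q"
    using x_mult_x_mult_R[OF i j c] unfolding s_def by metis
  define \<beta> :: "nat \<Rightarrow> nat" where "\<beta> = ((\<lambda>_. 0)(j := 1))(i := 1)"
  have \<beta>: "xmon \<beta> = x i \<otimes> x j" "\<beta> \<in> exps n" "total_deg \<beta> = 2"
    using x_mult_mon[OF i, of "(\<lambda>_. 0)(j := 1)"] x_eq_mon[OF j] ij i j
      total_deg_Suc[OF i, of "(\<lambda>_. 0)(j := 1)"] total_deg_Suc[OF j, of "\<lambda>_. 0"]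
      exps_fun_upd[OF exps_fun_upd[OF zero_in_exps j] i]
    by (auto simp: \<beta>_def)
  have sR: "s \<in> R" and cijR: "c\<^sub>i\<^sub>j \<in> R" using i j c cij by (auto simp: s_def)
  have lower: "a \<in> deg_below (total_deg \<beta>)" if "a \<in> lin_span A R x n" for a
    using that lin_span_deg_below_2 \<beta>(3) by auto
  have "x j \<otimes> x i = c\<^sub>i\<^sub>j \<otimes> xmon \<beta> \<oplus> p"
    using i j cijR by (simp add: \<beta>(1) p_def m_assoc add_minus_self)
  then have "has_leading_term (x j \<otimes> x i) c\<^sub>i\<^sub>j \<beta>"
    using cij(2) lower by (intro has_leading_termI) (simp_all add: p_def)
  then have "has_leading_term (s \<otimes> (x j \<otimes> x i) \<oplus> q) (s \<otimes> c\<^sub>i\<^sub>j) \<beta>"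
    using sR cijR q(1) lower by (intro has_leading_term_add_lower has_leading_term_smult) auto
  then have "has_leading_term (x j \<otimes> (x i \<otimes> c) \<oplus> (x i \<otimes> x j \<ominus> x j \<otimes> (x i \<otimes> c))) (s \<otimes> c\<^sub>i\<^sub>j) \<beta>"
    using sR cijR L lower by (intro has_leading_term_add_lower) (auto simp: q(2))
  then have lead: "has_leading_term (x i \<otimes> x j) (s \<otimes> c\<^sub>i\<^sub>j) \<beta>"
    using i j c by (simp add: add_minus_self)
  have "has_leading_term (x i \<otimes> x j) \<one> \<beta>"
    using has_leading_term_mon[OF one_in_R, of \<beta>] \<beta>(1) i j by simp
  then have "s \<otimes> c\<^sub>i\<^sub>j = \<one>"
    using leading_coeff_unique[OF lead _ \<beta>(2)] sR cijR by simp
  then have "s \<in> R_units"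
    by (rule R_units_left_inverse[OF commutation_coeff_unit[OF i j ij cij] sR])
  then show ?thesis
    using i j c by (simp add: s_def sigma_in_R_units_iff)
qed

lemma opp_skew_commutation:
  assumes i: "i \<in> {1..n}" and r: "r \<in> R - {\<zero>}"
  shows "\<exists>c\<in>R - {\<zero>}. r \<otimes> x i \<ominus> x i \<otimes> c \<in> R"
proof -
  have "inv_into R (\<sigma> i) r \<noteq> \<zero>"
  proof
    assume "inv_into R (\<sigma> i) r = \<zero>"
    then have "\<sigma> i (inv_into R (\<sigma> i) r) = \<sigma> i \<zero>" by simp
    then show False using i r by (simp add: sigma_zero)
  qed
  moreover have "r \<otimes> x i \<ominus> x i \<otimes> inv_into R (\<sigma> i) r \<in> R"
    using i r by (simp add: R_mult_x add_minus_cancel)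
  ultimately show ?thesis
    using i r by (intro bexI[of _ "inv_into R (\<sigma> i) r"]) auto
qed

lemma bijective_skew_PBW_opp: "bijective_skew_PBW (opp_ring A) R x n"
  unfolding bijective_skew_PBW_def skew_PBW_def
proof (intro conjI allI impI ballI)
  show "ring (opp_ring A)" by (rule ring_opp_ring)
  show "subring R (opp_ring A)" by (rule subring_R_opp)
  show "x i \<in> carrier (opp_ring A)" if "i \<in> {1..n}" for i
    using that by simp
  show "\<exists>!c. (\<forall>\<alpha>. c \<alpha> \<in> R) \<and> (\<forall>\<alpha>. \<alpha> \<notin> exps n \<longrightarrow> c \<alpha> = \<zero>\<^bsub>opp_ring A\<^esub>) \<and>
      finite {\<alpha>. c \<alpha> \<noteq> \<zero>\<^bsub>opp_ring A\<^esub>} \<and>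
      a = (\<Oplus>\<^bsub>opp_ring A\<^esub>\<alpha>\<in>{\<alpha>. c \<alpha> \<noteq> \<zero>\<^bsub>opp_ring A\<^esub>}. c \<alpha> \<otimes>\<^bsub>opp_ring A\<^esub> op_mon \<alpha>)"
    if "a \<in> carrier (opp_ring A)" for a
    using free_basis_opp[of a] that by (simp add: lin_comb_def)
  show "\<exists>c\<in>R - {\<zero>\<^bsub>opp_ring A\<^esub>}. x i \<otimes>\<^bsub>opp_ring A\<^esub> r \<ominus>\<^bsub>opp_ring A\<^esub> c \<otimes>\<^bsub>opp_ring A\<^esub> x i \<in> R"
    if "i \<in> {1..n}" "r \<in> R - {\<zero>\<^bsub>opp_ring A\<^esub>}" for i r
    using opp_skew_commutation that by simp
  show "\<exists>c\<in>R - {\<zero>\<^bsub>opp_ring A\<^esub>}. x j \<otimes>\<^bsub>opp_ring A\<^esub> x i \<ominus>\<^bsub>opp_ring A\<^esub> c \<otimes>\<^bsub>opp_ring A\<^esub> x i \<otimes>\<^bsub>opp_ring A\<^esub> x j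
      \<in> lin_span (opp_ring A) R x n" if "i \<in> {1..n}" "j \<in> {1..n}" for i j
    using opp_commutation[OF that] by (simp add: lin_span_opp)
  show "bij_betw (\<sigma>' i) R R" if "assoc_maps (opp_ring A) R x n \<sigma>' \<delta>'" "i \<in> {1..n}" for \<sigma>' \<delta>' i
    using assoc_maps_opp_bij[OF that] .
  show "\<exists>d\<in>R. c \<otimes>\<^bsub>opp_ring A\<^esub> d = \<one>\<^bsub>opp_ring A\<^esub> \<and> d \<otimes>\<^bsub>opp_ring A\<^esub> c = \<one>\<^bsub>opp_ring A\<^esub>"
    if "i \<in> {1..n}" "j \<in> {1..n}" "c \<in> R - {\<zero>\<^bsub>opp_ring A\<^esub>}" "i < j"
      "x j \<otimes>\<^bsub>opp_ring A\<^esub> x i \<ominus>\<^bsub>opp_ring A\<^esub> c \<otimes>\<^bsub>opp_ring A\<^esub> x i \<otimes>\<^bsub>opp_ring A\<^esub> x j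
        \<in> lin_span (opp_ring A) R x n" for i j c
  proof -
    have "c \<in> R_units"
      using that by (intro opp_commutation_coeff_unit) (auto simp: lin_span_opp)
    then show ?thesis
      by (auto simp: R_units_def)
  qed
qed

end

theorem proposition4p1:
  fixes A :: "('a, 'b) ring_scheme" and R :: "'a set" and x :: "nat \<Rightarrow> 'a" and n :: nat
    and \<sigma> \<delta> :: "nat \<Rightarrow> 'a \<Rightarrow> 'a"
  assumes "bijective_skew_PBW A R x n"
    and "assoc_maps A R x n \<sigma> \<delta>"
  shows "bijective_skew_PBW (opp_ring A) R x n \<and>
         assoc_maps (opp_ring A) R x n
           (\<lambda>i r. inv_into R (\<sigma> i) r)
           (\<lambda>i r. \<ominus>\<^bsub>A\<^esub> \<delta> i (inv_into R (\<sigma> i) r))"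
proof -
  interpret bijective_skew_PBW_maps A R x n \<sigma> \<delta>
    using assms by (rule bijective_skew_PBW_maps.intro)
  show ?thesis
    using bijective_skew_PBW_opp assoc_maps_opp by blast
qed

end
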